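(* Let $A,B\in\mathcal{M}_n$ and let $\psi\colon H^*(M(A);\mathbb{Q})\to H^*(M(B);\mathbb{Q})$ be a graded ring isomorphism. Then there exist nonzero rational numbers $q_1,\dots,q_n$ and a permutation $\sigma$ of $\{1,\dots,n\}$ such that $\psi(y^A_j)=q_j\,y^B_{\sigma(j)}$ for $j=1,\dots,n$.
   Context: Let $\mathcal{M}_n$ be the set of integral strictly upper triangular $n\times n$ matrices $A=(A^i_j)$ ($A^i_j$ is the $(i,j)$ entry, and $A^i_j=0$ for $i\ge j$). For $A\in\mathcal{M}_n$, $M(A)$ denotes the Bott manifold obtained as the quotient of $(S^3)^n$ ($S^3\subset\mathbb{C}^2$ the unit sphere) by the free $(S^1)^n$-action $(g_1,\dots,g_n)\cdot((z_1,w_1),\dots,(z_n,w_n))=\big(((\prod_{k<j}g_k^{-A^k_j})g_jz_j,\ g_jw_j)\big)_{j=1}^n$. Let $x^A_j\in H^2(M(A);\mathbb{Z})$ be the first Chern class of the line bundle obtained as the quotient of $(S^3)^n\times\mathbb{C}$ where $g$ acts on the $\mathbb{C}$-factor by $g_j^{-1}$. Put $\alpha^A_j=\sum_{i<j}A^i_jx^A_i$. Then $H^*(M(A);\mathbb{Z})=\mathbb{Z}[x^A_1,\dots,x^A_n]/((x^A_j)^2-\alpha^A_jx^A_j\mid j=1,\dots,n)$. Define $y^A_j=x^A_j-\tfrac12\alpha^A_j\in H^2(M(A);\mathbb{Q})$. The same notation is used for $B$. *)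

theory Defs
  imports Complex_Main "HOL-Library.Poly_Mapping" "HOL-Algebra.QuotRing" "HOL-Combinatorics.Permutations"
begin

(* Multivariate polynomials over Q: monomials are finitely supported
   exponent vectors nat \<Rightarrow>\<^sub>0 nat (variable x_i has index i, i = 1..n). *)
type_synonym mpoly = "(nat \<Rightarrow>\<^sub>0 nat) \<Rightarrow>\<^sub>0 rat"

definition Var :: "nat \<Rightarrow> mpoly" where
  "Var i = Poly_Mapping.single (Poly_Mapping.single i 1) 1"

definition Const :: "rat \<Rightarrow> mpoly" where
  "Const c = Poly_Mapping.single 0 c"

definition polys_in :: "nat \<Rightarrow> mpoly set" where
  "polys_in n = {p. \<forall>m \<in> Poly_Mapping.keys p. Poly_Mapping.keys m \<subseteq> {1..n}}"

(* homogeneous polynomials of polynomial degree d (cohomological degree 2d) *)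
definition homog :: "nat \<Rightarrow> mpoly set" where
  "homog d = {p. \<forall>m \<in> Poly_Mapping.keys p. (\<Sum>i\<in>Poly_Mapping.keys m. Poly_Mapping.lookup m i) = d}"

definition poly_ring :: "nat \<Rightarrow> mpoly ring" where
  "poly_ring n = \<lparr>carrier = polys_in n, monoid.mult = (*), one = 1, zero = 0, add = (+)\<rparr>"

definition bott_matrix :: "nat \<Rightarrow> (nat \<Rightarrow> nat \<Rightarrow> int) \<Rightarrow> bool" where
  "bott_matrix n A \<longleftrightarrow> (\<forall>i\<in>{1..n}. \<forall>j\<in>{1..n}. j \<le> i \<longrightarrow> A i j = 0)"

definition alpha :: "(nat \<Rightarrow> nat \<Rightarrow> int) \<Rightarrow> nat \<Rightarrow> mpoly" where
  "alpha A j = (\<Sum>i\<in>{1..<j}. Const (of_int (A i j)) * Var i)"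

definition bott_rels :: "nat \<Rightarrow> (nat \<Rightarrow> nat \<Rightarrow> int) \<Rightarrow> mpoly set" where
  "bott_rels n A = {Var j * Var j - alpha A j * Var j | j. j \<in> {1..n}}"

definition bott_ideal :: "nat \<Rightarrow> (nat \<Rightarrow> nat \<Rightarrow> int) \<Rightarrow> mpoly set" where
  "bott_ideal n A = genideal (poly_ring n) (bott_rels n A)"

(* H^*(M(A);Q) = Q[x_1..x_n]/(x_j^2 - alpha_j x_j) *)
definition coh :: "nat \<Rightarrow> (nat \<Rightarrow> nat \<Rightarrow> int) \<Rightarrow> mpoly set ring" where
  "coh n A = poly_ring n Quot bott_ideal n A"

definition cls :: "nat \<Rightarrow> (nat \<Rightarrow> nat \<Rightarrow> int) \<Rightarrow> mpoly \<Rightarrow> mpoly set" where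
  "cls n A p = bott_ideal n A +>\<^bsub>poly_ring n\<^esub> p"

(* the degree-2d part H^{2d}(M(A);Q) (odd degrees vanish) *)
definition coh_deg :: "nat \<Rightarrow> (nat \<Rightarrow> nat \<Rightarrow> int) \<Rightarrow> nat \<Rightarrow> mpoly set set" where
  "coh_deg n A d = {cls n A p | p. p \<in> polys_in n \<inter> homog d}"

definition ypoly :: "(nat \<Rightarrow> nat \<Rightarrow> int) \<Rightarrow> nat \<Rightarrow> mpoly" where
  "ypoly A j = Var j - Const (1/2) * alpha A j"

definition ycls :: "nat \<Rightarrow> (nat \<Rightarrow> nat \<Rightarrow> int) \<Rightarrow> nat \<Rightarrow> mpoly set" where
  "ycls n A j = cls n A (ypoly A j)"

definition graded_ring_iso ::
  "nat \<Rightarrow> (nat \<Rightarrow> nat \<Rightarrow> int) \<Rightarrow> (nat \<Rightarrow> nat \<Rightarrow> int) \<Rightarrow> (mpoly set \<Rightarrow> mpoly set) \<Rightarrow> bool" where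
  "graded_ring_iso n A B \<psi> \<longleftrightarrow>
     \<psi> \<in> ring_iso (coh n A) (coh n B) \<and> (\<forall>d. \<psi> ` coh_deg n A d \<subseteq> coh_deg n B d)"

end

theory Submission
  imports Defs
begin

(* In the rational basis y_j = x_j - alpha_j / 2 of H^2 the defining relations read y_j^2 = gamma_j^2, where
  gamma_j = alpha_j / 2 is a combination of the y_i with i < j, and the degree 4 part of the ideal of relations
  is exactly the span of these quadratic relations. Hence the matrix M of psi on H^2 is invertible and
  transports every relation of M(A) into the span of the relations of M(B). The two smallest indices i1 < i2
  satisfy y_i1^2 = 0 and y_i2^2 = (g y_i1)^2 = 0, and a linear class whose square lies in the span of the
  relations is a multiple of a single y_k; so the columns i1, i2 of M have single nonzero entries. Dividing out
  y_i1, resp. y_i2, and the corresponding y_k preserves all of this, and induction on n shows that every column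
  of M has a single nonzero entry, whose positions form a permutation since M is invertible. *)

section \<open>Quadratic forms in the span of the relations\<close>

definition gamma_coeff :: "(nat \<Rightarrow> nat \<Rightarrow> rat) \<Rightarrow> nat \<Rightarrow> nat \<Rightarrow> rat" where
  "gamma_coeff g j a = (if a < j then g j a else 0)"

(* Gram matrix of the relation y_j^2 - gamma_j^2, where gamma_j = \<Sum>_{a<j} g j a y_a. *)
definition rel_form :: "(nat \<Rightarrow> nat \<Rightarrow> rat) \<Rightarrow> nat \<Rightarrow> nat \<Rightarrow> nat \<Rightarrow> rat" where
  "rel_form g j a b = (if a = j \<and> b = j then 1 else 0) - gamma_coeff g j a * gamma_coeff g j b"

definition in_rel_span :: "nat set \<Rightarrow> (nat \<Rightarrow> nat \<Rightarrow> rat) \<Rightarrow> (nat \<Rightarrow> nat \<Rightarrow> rat) \<Rightarrow> bool" where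
  "in_rel_span I g S \<longleftrightarrow> (\<exists>c. \<forall>a\<in>I. \<forall>b\<in>I. S a b = (\<Sum>j\<in>I. c j * rel_form g j a b))"

definition sq_form :: "nat \<Rightarrow> nat \<Rightarrow> nat \<Rightarrow> rat" where
  "sq_form k a b = (if a = k \<and> b = k then 1 else 0)"

definition congr_form :: "nat set \<Rightarrow> (nat \<Rightarrow> nat \<Rightarrow> rat) \<Rightarrow> (nat \<Rightarrow> nat \<Rightarrow> rat) \<Rightarrow> nat \<Rightarrow> nat \<Rightarrow> rat" where
  "congr_form I M S a b = (\<Sum>i\<in>I. \<Sum>l\<in>I. M a i * S i l * M b l)"

definition inj_matrix :: "nat set \<Rightarrow> nat set \<Rightarrow> (nat \<Rightarrow> nat \<Rightarrow> rat) \<Rightarrow> bool" where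
  "inj_matrix I I' M \<longleftrightarrow> (\<forall>v. (\<forall>a\<in>I'. (\<Sum>i\<in>I. M a i * v i) = 0) \<longrightarrow> (\<forall>i\<in>I. v i = 0))"

definition rel_preserving ::
  "nat set \<Rightarrow> (nat \<Rightarrow> nat \<Rightarrow> rat) \<Rightarrow> nat set \<Rightarrow> (nat \<Rightarrow> nat \<Rightarrow> rat) \<Rightarrow> (nat \<Rightarrow> nat \<Rightarrow> rat) \<Rightarrow> bool" where
  "rel_preserving I g I' g' M \<longleftrightarrow>
     (\<forall>j\<in>I. in_rel_span I' g' (congr_form I M (rel_form g j))) \<and> inj_matrix I I' M"

definition column_at :: "nat set \<Rightarrow> (nat \<Rightarrow> nat \<Rightarrow> rat) \<Rightarrow> nat \<Rightarrow> nat \<Rightarrow> bool" where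
  "column_at I' M i k \<longleftrightarrow> M k i \<noteq> 0 \<and> (\<forall>b\<in>I'. b \<noteq> k \<longrightarrow> M b i = 0)"

lemma inj_matrixD:
  assumes "inj_matrix I I' M" "\<And>a. a \<in> I' \<Longrightarrow> (\<Sum>i\<in>I. M a i * v i) = 0" "i \<in> I"
  shows "v i = 0"
  using assms unfolding inj_matrix_def by blast

lemma inj_matrix_column_not_combination:
  assumes inj: "inj_matrix I I' M" and fin: "finite I" and i: "i \<in> I"
    and comb: "\<And>b. b \<in> I' \<Longrightarrow> M b i = (\<Sum>l\<in>J. c l * M b l)" and J: "J \<subseteq> I - {i}"
  shows False
proof -
  define v where "v x = (if x = i then 1 else if x \<in> J then - c x else 0)" for x
  have "(\<Sum>x\<in>I. M b x * v x) = 0" if b: "b \<in> I'" for b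
  proof -
    have "(\<Sum>x\<in>I. M b x * v x)
        = (\<Sum>x\<in>I. if x = i then M b i else 0) - (\<Sum>x\<in>I. if x \<in> J then c x * M b x else 0)"
      unfolding sum_subtractf[symmetric] using J by (intro sum.cong) (auto simp: v_def)
    also have "\<dots> = M b i - (\<Sum>l\<in>I \<inter> J. c l * M b l)"
      using fin i by (simp add: sum.inter_restrict)
    also have "I \<inter> J = J" using J by blast
    finally show ?thesis using comb[OF b] by simp
  qed
  from inj_matrixD[OF inj this i] show False by (simp add: v_def)
qed

(* rel_form g j vanishes at every entry (a, b) with j \<le> b except (j, j). *)
lemma rel_form_sum_upper:
  assumes "finite I" "\<forall>j\<in>I. c j \<noteq> 0 \<longrightarrow> j \<le> b"
  shows "(\<Sum>j\<in>I. c j * rel_form g j a b) = (if a = b \<and> b \<in> I then c b else 0)"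
proof -
  have "(\<Sum>j\<in>I. c j * rel_form g j a b) = (\<Sum>j\<in>I. if j = b then (if a = b then c b else 0) else 0)"
  proof (rule sum.cong)
    fix j assume "j \<in> I"
    then show "c j * rel_form g j a b = (if j = b then (if a = b then c b else 0) else 0)"
      using assms(2) by (cases "c j = 0") (auto simp: rel_form_def gamma_coeff_def)
  qed simp
  also have "\<dots> = (if a = b \<and> b \<in> I then c b else 0)"
    using assms(1) by (simp add: sum.delta)
  finally show ?thesis .
qed

lemma rel_form_sym: "rel_form g j a b = rel_form g j b a"
  by (simp add: rel_form_def mult.commute conj_commute)

lemma in_rel_span_cong:
  assumes "in_rel_span I g S" "\<And>a b. a \<in> I \<Longrightarrow> b \<in> I \<Longrightarrow> S a b = S' a b"
  shows "in_rel_span I g S'"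
  using assms unfolding in_rel_span_def by metis

lemma in_rel_span_zero: "in_rel_span I g (\<lambda>a b. 0)"
  unfolding in_rel_span_def by (rule exI[of _ "\<lambda>j. 0"]) simp

lemma in_rel_span_add:
  assumes "in_rel_span I g S" "in_rel_span I g S'"
  shows "in_rel_span I g (\<lambda>a b. S a b + S' a b)"
proof -
  obtain c where "\<forall>a\<in>I. \<forall>b\<in>I. S a b = (\<Sum>j\<in>I. c j * rel_form g j a b)"
    using assms(1) in_rel_span_def by auto
  moreover obtain d where "\<forall>a\<in>I. \<forall>b\<in>I. S' a b = (\<Sum>j\<in>I. d j * rel_form g j a b)"
    using assms(2) in_rel_span_def by auto
  ultimately show ?thesis unfolding in_rel_span_def
    by (intro exI[of _ "\<lambda>j. c j + d j"]) (simp add: distrib_right sum.distrib)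
qed

lemma in_rel_span_smult:
  assumes "in_rel_span I g S"
  shows "in_rel_span I g (\<lambda>a b. r * S a b)"
proof -
  obtain c where "\<forall>a\<in>I. \<forall>b\<in>I. S a b = (\<Sum>j\<in>I. c j * rel_form g j a b)"
    using assms in_rel_span_def by auto
  then show ?thesis unfolding in_rel_span_def
    by (intro exI[of _ "\<lambda>j. r * c j"]) (simp add: sum_distrib_left mult.assoc)
qed

lemma in_rel_span_sum:
  assumes "finite J" "\<And>x. x \<in> J \<Longrightarrow> in_rel_span I g (f x)"
  shows "in_rel_span I g (\<lambda>a b. \<Sum>x\<in>J. f x a b)"
  using assms
proof (induction J rule: finite_induct)
  case empty
  then show ?case by (simp add: in_rel_span_zero)
next
  case (insert x F)
  have "in_rel_span I g (\<lambda>a b. f x a b + (\<Sum>x\<in>F. f x a b))"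
    using insert by (intro in_rel_span_add) auto
  then show ?case using insert by simp
qed

lemma in_rel_span_rel_form:
  assumes "finite I" "j \<in> I"
  shows "in_rel_span I g (rel_form g j)"
  unfolding in_rel_span_def
proof (intro exI[of _ "\<lambda>i. if i = j then 1 else 0"] ballI)
  fix a b
  have "(\<Sum>i\<in>I. (if i = j then 1 else 0) * rel_form g i a b) = (\<Sum>i\<in>I. if i = j then rel_form g i a b else 0)"
    by (rule sum.cong) auto
  then show "rel_form g j a b = (\<Sum>i\<in>I. (if i = j then 1 else 0) * rel_form g i a b)"
    using assms by (simp add: sum.delta)
qed

lemma congr_form_cong:
  assumes "\<And>i l. i \<in> I \<Longrightarrow> l \<in> I \<Longrightarrow> S i l = S' i l"
  shows "congr_form I M S a b = congr_form I M S' a b"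
  unfolding congr_form_def using assms by (auto intro!: sum.cong)

lemma congr_form_sum:
  "congr_form I M (\<lambda>a b. \<Sum>j\<in>J. c j * X j a b) a b = (\<Sum>j\<in>J. c j * congr_form I M (X j) a b)"
  unfolding congr_form_def
  by (simp add: sum_distrib_left sum_distrib_right mult.assoc mult.left_commute sum.swap[of _ J])

lemma congr_form_sq_form:
  assumes "finite I" "j \<in> I"
  shows "congr_form I M (sq_form j) a b = M a j * M b j"
proof -
  have "(\<Sum>l\<in>I. M a i * sq_form j i l * M b l) = (if i = j then M a j * M b j else 0)" for i
  proof -
    have "(\<Sum>l\<in>I. M a i * sq_form j i l * M b l) = (\<Sum>l\<in>I. if l = j then (if i = j then M a j * M b j else 0) else 0)"
      by (rule sum.cong) (auto simp: sq_form_def)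
    then show ?thesis using assms by (simp add: sum.delta)
  qed
  then show ?thesis using assms by (simp add: congr_form_def sum.delta)
qed

lemma congr_form_rel_form:
  assumes "finite N" "j \<in> N"
  shows "congr_form N M (rel_form g j) a b
       = M a j * M b j - (\<Sum>i\<in>N. M a i * gamma_coeff g j i) * (\<Sum>l\<in>N. M b l * gamma_coeff g j l)"
proof -
  have "congr_form N M (rel_form g j) a b
      = (\<Sum>i\<in>N. \<Sum>l\<in>N. (if i = j then (if l = j then M a i * M b l else 0) else 0)
         - (M a i * gamma_coeff g j i) * (M b l * gamma_coeff g j l))"
    unfolding congr_form_def rel_form_def by (intro sum.cong refl) (auto simp: algebra_simps)
  also have "\<dots> = (\<Sum>i\<in>N. \<Sum>l\<in>N. (if i = j then (if l = j then M a i * M b l else 0) else 0))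
       - (\<Sum>i\<in>N. M a i * gamma_coeff g j i) * (\<Sum>l\<in>N. M b l * gamma_coeff g j l)"
    by (simp add: sum_subtractf sum_product)
  also have "(\<Sum>i\<in>N. \<Sum>l\<in>N. (if i = j then (if l = j then M a i * M b l else 0) else 0)) = M a j * M b j"
  proof -
    have "(\<Sum>i\<in>N. \<Sum>l\<in>N. (if i = j then (if l = j then M a i * M b l else 0) else 0))
        = (\<Sum>i\<in>N. if i = j then (\<Sum>l\<in>N. if l = j then M a i * M b l else 0) else 0)"
      by (rule sum.cong) auto
    then show ?thesis using assms by (simp add: sum.delta)
  qed
  finally show ?thesis .
qed

lemma congr_form_in_rel_span:
  assumes "finite I" "\<forall>j\<in>I. in_rel_span I' g' (congr_form I M (rel_form g j))" "in_rel_span I g S"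
  shows "in_rel_span I' g' (congr_form I M S)"
proof -
  obtain c where c: "\<forall>a\<in>I. \<forall>b\<in>I. S a b = (\<Sum>j\<in>I. c j * rel_form g j a b)"
    using assms(3) in_rel_span_def by auto
  have span: "in_rel_span I' g' (\<lambda>a b. \<Sum>j\<in>I. c j * congr_form I M (rel_form g j) a b)"
    using assms by (intro in_rel_span_sum in_rel_span_smult) auto
  have "congr_form I M S a b = (\<Sum>j\<in>I. c j * congr_form I M (rel_form g j) a b)" for a b
    using congr_form_cong[of I S "\<lambda>a b. \<Sum>j\<in>I. c j * rel_form g j a b" M a b] c congr_form_sum by simp
  then show ?thesis by (intro in_rel_span_cong[OF span]) simp
qed

lemma max_nonzero_coeff:
  fixes I :: "'a::linorder set"
  assumes "finite I" "j \<in> I" "c j \<noteq> 0"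
  obtains m where "m \<in> I" "c m \<noteq> 0" "\<forall>j\<in>I. c j \<noteq> 0 \<longrightarrow> j \<le> m"
proof -
  define C where "C = {j\<in>I. c j \<noteq> 0}"
  have C: "finite C" "C \<noteq> {}" using assms by (auto simp: C_def)
  show ?thesis
  proof (rule that)
    show "Max C \<in> I" "c (Max C) \<noteq> 0" using Max_in[OF C] by (auto simp: C_def)
    show "\<forall>j\<in>I. c j \<noteq> 0 \<longrightarrow> j \<le> Max C" using Max_ge[OF C(1)] by (auto simp: C_def)
  qed
qed

lemma in_rel_span_coeffs_bounded:
  assumes fin: "finite I"
    and c: "\<forall>a\<in>I. \<forall>b\<in>I. S a b = (\<Sum>j\<in>I. c j * rel_form g j a b)"
    and S: "\<And>a. a \<in> I \<Longrightarrow> S a a \<noteq> 0 \<Longrightarrow> a \<le> m"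
  shows "\<forall>j\<in>I. c j \<noteq> 0 \<longrightarrow> j \<le> m"
proof (cases "\<exists>j\<in>I. c j \<noteq> 0")
  case True
  then obtain top where top: "top \<in> I" "c top \<noteq> 0" "\<forall>j\<in>I. c j \<noteq> 0 \<longrightarrow> j \<le> top"
    using max_nonzero_coeff[OF fin] by blast
  have "S top top = c top"
    using c top rel_form_sum_upper[OF fin top(3), of g top] by simp
  then have "top \<le> m" using S top by auto
  then show ?thesis using top by auto
qed auto

lemma rank_one_in_rel_span_single:
  assumes fin: "finite I" and span: "in_rel_span I g (\<lambda>a b. z a * z b)" and m: "m \<in> I" "z m \<noteq> 0"
  shows "\<exists>k\<in>I. z k \<noteq> 0 \<and> (\<forall>a\<in>I. a \<noteq> k \<longrightarrow> z a = 0)"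
proof -
  obtain c where c: "\<forall>a\<in>I. \<forall>b\<in>I. z a * z b = (\<Sum>j\<in>I. c j * rel_form g j a b)"
    using span in_rel_span_def by auto
  obtain k where k: "k \<in> I" "z k \<noteq> 0" "\<forall>a\<in>I. z a \<noteq> 0 \<longrightarrow> a \<le> k"
    using max_nonzero_coeff[of I m z] fin m by blast
  have "\<forall>j\<in>I. c j \<noteq> 0 \<longrightarrow> j \<le> k"
    by (rule in_rel_span_coeffs_bounded[OF fin c]) (use k in auto)
  then have "z a * z k = 0" if "a \<in> I" "a \<noteq> k" for a
    using c that k rel_form_sum_upper[OF fin, of c k g a] by simp
  then show ?thesis using k by auto
qed

lemma in_rel_span_remove:
  assumes fin: "finite I" and k: "k \<in> I"
    and sq: "in_rel_span I g (sq_form k)" and S: "in_rel_span I g S"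
  shows "in_rel_span (I - {k}) g S"
proof -
  obtain d where d: "\<forall>a\<in>I. \<forall>b\<in>I. sq_form k a b = (\<Sum>j\<in>I. d j * rel_form g j a b)"
    using sq in_rel_span_def by auto
  obtain c where c: "\<forall>a\<in>I. \<forall>b\<in>I. S a b = (\<Sum>j\<in>I. c j * rel_form g j a b)"
    using S in_rel_span_def by auto
  have dk: "\<forall>j\<in>I. d j \<noteq> 0 \<longrightarrow> j \<le> k"
    by (rule in_rel_span_coeffs_bounded[OF fin d]) (auto simp: sq_form_def split: if_splits)
  have "sq_form k k k = (\<Sum>j\<in>I. d j * rel_form g j k k)" using d k by blast
  then have "d k = 1" using k rel_form_sum_upper[OF fin dk, of g k] by (simp add: sq_form_def)
  then have rel_k: "rel_form g k a b = - (\<Sum>j\<in>I-{k}. d j * rel_form g j a b)"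
    if "a \<in> I - {k}" "b \<in> I - {k}" for a b
  proof -
    have "0 = (\<Sum>j\<in>I. d j * rel_form g j a b)" using d that by (auto simp: sq_form_def)
    also have "\<dots> = d k * rel_form g k a b + (\<Sum>j\<in>I-{k}. d j * rel_form g j a b)"
      using fin k by (rule sum.remove)
    finally show ?thesis using \<open>d k = 1\<close> by (simp add: eq_neg_iff_add_eq_0)
  qed
  show ?thesis unfolding in_rel_span_def
  proof (intro exI[of _ "\<lambda>j. c j - c k * d j"] ballI)
    fix a b assume ab: "a \<in> I - {k}" "b \<in> I - {k}"
    have "S a b = c k * rel_form g k a b + (\<Sum>j\<in>I-{k}. c j * rel_form g j a b)"
      using c ab by (simp add: sum.remove[OF fin k])
    also have "\<dots> = (\<Sum>j\<in>I-{k}. (c j - c k * d j) * rel_form g j a b)"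
      using rel_k[OF ab] by (simp add: sum_distrib_left left_diff_distrib sum_subtractf mult.assoc)
    finally show "S a b = (\<Sum>j\<in>I-{k}. (c j - c k * d j) * rel_form g j a b)" .
  qed
qed

lemma rel_preserving_remove:
  assumes fin: "finite I" "finite I'" and pres: "rel_preserving I g I' g' M"
    and j: "j \<in> I" and k: "k \<in> I'" and col: "column_at I' M j k"
    and sq: "in_rel_span I' g' (sq_form k)"
  shows "rel_preserving (I - {j}) g (I' - {k}) g' M"
proof -
  have span: "\<forall>j\<in>I. in_rel_span I' g' (congr_form I M (rel_form g j))" and inj: "inj_matrix I I' M"
    using pres rel_preserving_def by auto
  have Mj: "M a j = 0" if "a \<in> I' - {k}" for a
    using col that by (auto simp: column_at_def)
  have congr_eq: "congr_form (I - {j}) M X a b = congr_form I M X a b"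
    if "a \<in> I' - {k}" "b \<in> I' - {k}" for X a b
    unfolding congr_form_def using that fin(1) j
    by (simp add: sum.remove[of I j] Mj sum_distrib_left[symmetric] sum_distrib_right[symmetric])
  have "in_rel_span (I' - {k}) g' (congr_form (I - {j}) M (rel_form g j'))" if "j' \<in> I - {j}" for j'
  proof -
    have "in_rel_span (I' - {k}) g' (congr_form I M (rel_form g j'))"
      using in_rel_span_remove[OF fin(2) k sq] span that by auto
    then show ?thesis by (rule in_rel_span_cong) (simp add: congr_eq)
  qed
  moreover have "inj_matrix (I - {j}) (I' - {k}) M"
    unfolding inj_matrix_def
  proof (intro allI impI)
    fix v assume v: "\<forall>a\<in>I' - {k}. (\<Sum>i\<in>I - {j}. M a i * v i) = 0"
    define w where "w = v(j := - (\<Sum>i\<in>I - {j}. M k i * v i) / M k j)"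
    have "(\<Sum>i\<in>I. M a i * w i) = M a j * w j + (\<Sum>i\<in>I - {j}. M a i * v i)" for a
      using fin j by (simp add: sum.remove w_def)
    then have "(\<Sum>i\<in>I. M a i * w i) = 0" if "a \<in> I'" for a
      using col v that by (cases "a = k") (auto simp: column_at_def w_def)
    then have "\<forall>i\<in>I. w i = 0" using inj inj_matrix_def by blast
    then show "\<forall>i\<in>I - {j}. v i = 0"
      unfolding w_def by (metis DiffD1 DiffD2 fun_upd_other singletonI)
  qed
  ultimately show ?thesis by (simp add: rel_preserving_def)
qed

lemma rel_preserving_sq_form:
  assumes fin: "finite I" "finite I'" and pres: "rel_preserving I g I' g' M"
    and j: "j \<in> I" and sq: "in_rel_span I g (sq_form j)"
  shows "\<exists>k\<in>I'. column_at I' M j k \<and> in_rel_span I' g' (sq_form k)"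
proof -
  have span: "\<forall>j\<in>I. in_rel_span I' g' (congr_form I M (rel_form g j))" and inj: "inj_matrix I I' M"
    using pres rel_preserving_def by auto
  have "in_rel_span I' g' (congr_form I M (sq_form j))"
    by (rule congr_form_in_rel_span[OF fin(1) span sq])
  then have col_sq: "in_rel_span I' g' (\<lambda>a b. M a j * M b j)"
    by (rule in_rel_span_cong) (simp add: congr_form_sq_form[OF fin(1) j])
  have "\<exists>m\<in>I'. M m j \<noteq> 0"
  proof (rule ccontr)
    assume "\<not> (\<exists>m\<in>I'. M m j \<noteq> 0)"
    then have "(\<Sum>i\<in>I. M a i * (if i = j then 1 else 0)) = 0" if "a \<in> I'" for a
      using that fin(1) j by (simp add: if_distrib[of "(*) _"] sum.delta cong: if_cong)
    from inj_matrixD[OF inj this j] show False by simp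
  qed
  then obtain k where k: "k \<in> I'" "M k j \<noteq> 0" "\<forall>a\<in>I'. a \<noteq> k \<longrightarrow> M a j = 0"
    using rank_one_in_rel_span_single[OF fin(2) col_sq] by blast
  have "in_rel_span I' g' (\<lambda>a b. (1 / (M k j * M k j)) * (M a j * M b j))"
    by (rule in_rel_span_smult[OF col_sq])
  then have "in_rel_span I' g' (sq_form k)"
    by (rule in_rel_span_cong) (use k in \<open>auto simp: sq_form_def\<close>)
  then show ?thesis using k by (auto simp: column_at_def)
qed

lemma sq_form_min_in_rel_span:
  assumes "finite I" "i1 \<in> I" "\<forall>a\<in>I. i1 \<le> a"
  shows "in_rel_span I g (sq_form i1)"
  by (rule in_rel_span_cong[OF in_rel_span_rel_form[OF assms(1,2)]])
    (use assms(3) in \<open>auto simp: rel_form_def gamma_coeff_def sq_form_def\<close>)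

(* y_{i2}^2 = gamma_{i2}^2 = (g i2 i1)^2 y_{i1}^2, and y_{i1}^2 = 0 *)
lemma sq_form_second_min_in_rel_span:
  assumes fin: "finite I" and i1: "i1 \<in> I" "\<forall>a\<in>I. i1 \<le> a"
    and i2: "i2 \<in> I" "i2 \<noteq> i1" "\<forall>a\<in>I - {i1}. i2 \<le> a"
  shows "in_rel_span I g (sq_form i2)"
proof -
  have lt: "i1 < i2" using i1 i2 by force
  have "in_rel_span I g (\<lambda>a b. rel_form g i2 a b + (g i2 i1 * g i2 i1) * rel_form g i1 a b)"
    by (intro in_rel_span_add in_rel_span_smult in_rel_span_rel_form fin i1 i2)
  moreover have "rel_form g i2 a b + (g i2 i1 * g i2 i1) * rel_form g i1 a b = sq_form i2 a b"
    if "a \<in> I" "b \<in> I" for a b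
  proof -
    have "gamma_coeff g i2 x = (if x = i1 then g i2 i1 else 0)" "gamma_coeff g i1 x = 0"
      if "x \<in> I" for x
      using that i1 i2 lt by (auto simp: gamma_coeff_def not_less[symmetric])
    then show ?thesis using that lt
      by (cases "a = i1"; cases "b = i1") (auto simp: rel_form_def sq_form_def)
  qed
  ultimately show ?thesis by (rule in_rel_span_cong)
qed

lemma inj_matrix_column_at_eq:
  assumes inj: "inj_matrix I I' M" and fin: "finite I" and i: "i \<in> I" "i' \<in> I"
    and col: "column_at I' M i k" "column_at I' M i' k"
  shows "i = i'"
proof (rule ccontr)
  assume "i \<noteq> i'"
  have "M b i' = (\<Sum>l\<in>{i}. M k i' / M k i * M b l)" if "b \<in> I'" for b
    using col that by (cases "b = k") (auto simp: column_at_def)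
  moreover have "{i} \<subseteq> I - {i'}" using i \<open>i \<noteq> i'\<close> by blast
  ultimately show False by (rule inj_matrix_column_not_combination[OF inj fin i(2)])
qed

(* Otherwise column i would be supported on {k1, k2}, hence lie in the span of columns i1 and i2. *)
lemma inj_matrix_column_at_glue:
  assumes inj: "inj_matrix I I' M" and fin: "finite I"
    and i1: "i1 \<in> I" "column_at I' M i1 k1" and i2: "i2 \<in> I" "column_at I' M i2 k2"
    and "i1 \<noteq> i2" "k1 \<noteq> k2" and i: "i \<in> I" "i \<noteq> i1" "i \<noteq> i2"
    and a: "a \<in> I' - {k1}" "column_at (I' - {k1}) M i a"
    and c: "c \<in> I' - {k2}" "column_at (I' - {k2}) M i c"
  shows "column_at I' M i a"
proof -
  have "a = c"
  proof (rule ccontr)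
    assume "a \<noteq> c"
    then have "a = k2" "c = k1" using a c by (auto simp: column_at_def)
    then have outside: "M b i = 0" if "b \<in> I'" "b \<noteq> k1" "b \<noteq> k2" for b
      using a that by (simp add: column_at_def)
    define coef where "coef l = (if l = i1 then M k1 i / M k1 i1 else M k2 i / M k2 i2)" for l
    have "M b i = (\<Sum>l\<in>{i1, i2}. coef l * M b l)" if "b \<in> I'" for b
    proof -
      have "(\<Sum>l\<in>{i1, i2}. coef l * M b l) = M k1 i / M k1 i1 * M b i1 + M k2 i / M k2 i2 * M b i2"
        using \<open>i1 \<noteq> i2\<close> by (simp add: coef_def)
      then show ?thesis
        using i1(2) i2(2) \<open>k1 \<noteq> k2\<close> outside that
        by (cases "b = k1"; cases "b = k2") (simp_all add: column_at_def)
    qed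
    moreover have "{i1, i2} \<subseteq> I - {i}" using i1 i2 i by blast
    ultimately show False by (rule inj_matrix_column_not_combination[OF inj fin i(1)])
  qed
  then show ?thesis using a c \<open>k1 \<noteq> k2\<close> by (auto simp: column_at_def)
qed

(* Induction on |I|: the two smallest indices i1 < i2 of I have y_i^2 = 0, so their columns have single
  entries k1 \<noteq> k2. Removing i1 and k1, resp. i2 and k2, gives column i a single entry in I' - {k1} and
  in I' - {k2}, and these glue together. *)
lemma rel_preserving_column_at:
  assumes "finite I" "finite I'" "rel_preserving I g I' g' M" "i \<in> I"
  shows "\<exists>k\<in>I'. column_at I' M i k"
  using assms
proof (induction "card I" arbitrary: I I' i rule: less_induct)
  case less
  note fin = less.prems(1,2) and pres = less.prems(3) and i = less.prems(4)
  have inj: "inj_matrix I I' M" using pres rel_preserving_def by auto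
  have IH: "\<exists>k\<in>I' - {kj}. column_at (I' - {kj}) M i k"
    if "j \<in> I" "i \<noteq> j" "kj \<in> I'" "column_at I' M j kj" "in_rel_span I' g' (sq_form kj)" for j kj
  proof -
    have "card (I - {j}) < card I" by (rule card_Diff1_less[OF fin(1) that(1)])
    moreover have "rel_preserving (I - {j}) g (I' - {kj}) g' M"
      by (rule rel_preserving_remove[OF fin pres that(1,3,4,5)])
    ultimately show ?thesis using less.hyps[of "I - {j}" "I' - {kj}" i] fin i that(2) by simp
  qed
  define i1 where "i1 = Min I"
  have "I \<noteq> {}" using i by blast
  then have i1: "i1 \<in> I" "\<forall>a\<in>I. i1 \<le> a" using fin(1) by (simp_all add: i1_def)
  obtain k1 where k1: "k1 \<in> I'" "column_at I' M i1 k1" "in_rel_span I' g' (sq_form k1)"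
    using rel_preserving_sq_form[OF fin pres i1(1) sq_form_min_in_rel_span[OF fin(1) i1]] by blast
  show ?case
  proof (cases "i = i1")
    case True then show ?thesis using k1 by blast
  next
    case i_ne_i1: False
    define i2 where "i2 = Min (I - {i1})"
    have "I - {i1} \<noteq> {}" using i i_ne_i1 by blast
    then have i2: "i2 \<in> I" "i2 \<noteq> i1" "\<forall>a\<in>I - {i1}. i2 \<le> a"
      using fin(1) Min_in[of "I - {i1}"] by (auto simp: i2_def)
    obtain k2 where k2: "k2 \<in> I'" "column_at I' M i2 k2" "in_rel_span I' g' (sq_form k2)"
      using rel_preserving_sq_form[OF fin pres i2(1)
          sq_form_second_min_in_rel_span[OF fin(1) i1 i2]] by blast
    show ?thesis
    proof (cases "i = i2")
      case True then show ?thesis using k2 by blast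
    next
      case i_ne_i2: False
      have "k1 \<noteq> k2"
        using inj_matrix_column_at_eq[OF inj fin(1) i1(1) i2(1) k1(2)] k2(2) i2(2) by auto
      obtain a where a: "a \<in> I' - {k1}" "column_at (I' - {k1}) M i a"
        using IH[OF i1(1) i_ne_i1 k1] by blast
      obtain c where "c \<in> I' - {k2}" "column_at (I' - {k2}) M i c"
        using IH[OF i2(1) i_ne_i2 k2] by blast
      then have "column_at I' M i a"
        using inj_matrix_column_at_glue[OF inj fin(1) i1(1) k1(2) i2(1) k2(2)] i2(2) \<open>k1 \<noteq> k2\<close>
          i i_ne_i1 i_ne_i2 a by blast
      then show ?thesis using a by blast
    qed
  qed
qed

lemma inj_matrix_column_at_permutes:
  assumes fin: "finite I" and inj: "inj_matrix I I M" and cols: "\<And>i. i \<in> I \<Longrightarrow> \<exists>k\<in>I. column_at I M i k"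
  shows "\<exists>\<sigma>. \<sigma> permutes I \<and> (\<forall>i\<in>I. column_at I M i (\<sigma> i))"
proof -
  define \<sigma> where "\<sigma> i = (if i \<in> I then SOME k. k \<in> I \<and> column_at I M i k else i)" for i
  have \<sigma>: "\<sigma> i \<in> I" "column_at I M i (\<sigma> i)" if "i \<in> I" for i
    using someI_ex[OF cols[OF that, unfolded Bex_def]] that by (simp_all add: \<sigma>_def)
  have "inj_on \<sigma> I"
    using inj_matrix_column_at_eq[OF inj fin] \<sigma> by (metis inj_onI)
  moreover have "\<sigma> ` I \<subseteq> I" using \<sigma> by blast
  ultimately have "bij_betw \<sigma> I I" using endo_inj_surj[OF fin] by (simp add: bij_betw_def)
  then have "\<sigma> permutes I" by (rule bij_imp_permutes) (simp add: \<sigma>_def)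
  then show ?thesis using \<sigma> by blast
qed

section \<open>Polynomials and the ideal of relations\<close>

definition monom2 :: "nat \<Rightarrow> nat \<Rightarrow> (nat \<Rightarrow>\<^sub>0 nat)" where
  "monom2 a b = Poly_Mapping.single a 1 + Poly_Mapping.single b 1"

definition lin_poly :: "nat \<Rightarrow> (nat \<Rightarrow> rat) \<Rightarrow> mpoly" where
  "lin_poly n u = (\<Sum>i\<in>{1..n}. Const (u i) * Var i)"

lemma Const_mult: "Const a * Const b = Const (a * b)"
  by (simp add: Const_def mult_single)

lemma Const_add: "Const a + Const b = Const (a + b)"
  by (simp add: Const_def single_add)

lemma Const_diff: "Const a - Const b = Const (a - b)"
  by (simp add: Const_def single_diff)

lemma Const_0 [simp]: "Const 0 = 0"
  by (simp add: Const_def)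

lemma Const_1 [simp]: "Const 1 = 1"
  by (simp add: Const_def)

lemma lookup_Const_mult: "Poly_Mapping.lookup (Const c * p) m = c * Poly_Mapping.lookup p m"
proof -
  have "Const c * p = Poly_Mapping.map ((*) c) p" by (simp add: Const_def mult_map_scale_conv_mult)
  then show ?thesis by (simp add: map.rep_eq when_def)
qed

lemma Const_mult_Var: "Const c * Var i = Poly_Mapping.single (Poly_Mapping.single i 1) c"
  by (simp add: Const_def Var_def mult_single)

lemma single_one_eq_iff: "Poly_Mapping.single i (1::nat) = Poly_Mapping.single a 1 \<longleftrightarrow> i = a"
  by (metis lookup_single_eq lookup_single_not_eq zero_neq_one)

lemma lookup_lin_poly:
  "Poly_Mapping.lookup (lin_poly n u) m = (\<Sum>i\<in>{1..n}. (u i when Poly_Mapping.single i 1 = m))"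
  by (simp add: lin_poly_def lookup_sum Const_mult_Var lookup_single)

lemma lookup_lin_poly_single:
  assumes "a \<in> {1..n}"
  shows "Poly_Mapping.lookup (lin_poly n u) (Poly_Mapping.single a 1) = u a"
proof -
  have "(\<Sum>i\<in>{1..n}. (u i when Poly_Mapping.single i (1::nat) = Poly_Mapping.single a 1))
      = (\<Sum>i\<in>{1..n}. if i = a then u i else 0)"
    unfolding when_def by (intro sum.cong refl) (metis single_one_eq_iff)
  then show ?thesis using assms by (simp add: lookup_lin_poly)
qed

lemma keys_lin_poly: "m \<in> Poly_Mapping.keys (lin_poly n u) \<Longrightarrow> \<exists>i\<in>{1..n}. m = Poly_Mapping.single i 1"
proof -
  assume "m \<in> Poly_Mapping.keys (lin_poly n u)"
  then have "(\<Sum>i\<in>{1..n}. (u i when Poly_Mapping.single i (1::nat) = m)) \<noteq> 0"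
    by (simp add: in_keys_iff lookup_lin_poly)
  then obtain i where "i \<in> {1..n}" "(u i when Poly_Mapping.single i (1::nat) = m) \<noteq> 0"
    by (meson sum.not_neutral_contains_not_neutral)
  then show ?thesis by (auto simp: when_def split: if_splits)
qed

lemma lin_poly_add: "lin_poly n u + lin_poly n v = lin_poly n (\<lambda>i. u i + v i)"
  by (simp add: lin_poly_def sum.distrib[symmetric] Const_add[symmetric] distrib_right)

lemma lin_poly_diff: "lin_poly n u - lin_poly n v = lin_poly n (\<lambda>i. u i - v i)"
  by (simp add: lin_poly_def sum_subtractf[symmetric] Const_diff[symmetric] left_diff_distrib)

lemma Const_mult_lin_poly: "Const c * lin_poly n u = lin_poly n (\<lambda>i. c * u i)"
  by (simp add: lin_poly_def sum_distrib_left mult.assoc[symmetric] Const_mult)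

lemma sum_lin_poly: "(\<Sum>s\<in>S. lin_poly n (f s)) = lin_poly n (\<lambda>i. \<Sum>s\<in>S. f s i)"
proof (induction S rule: infinite_finite_induct)
  case (insert x F)
  then show ?case by (simp add: lin_poly_add)
qed (simp_all add: lin_poly_def)

lemma Var_eq_lin_poly: "j \<in> {1..n} \<Longrightarrow> Var j = lin_poly n (\<lambda>i. if i = j then 1 else 0)"
proof -
  assume j: "j \<in> {1..n}"
  have "lin_poly n (\<lambda>i. if i = j then 1 else 0) = (\<Sum>i\<in>{1..n}. if i = j then Var i else 0)"
    unfolding lin_poly_def by (rule sum.cong) auto
  then show ?thesis using j by (simp add: sum.delta)
qed

lemma alpha_eq_lin_poly: "j \<le> n \<Longrightarrow> alpha A j = lin_poly n (\<lambda>i. if i < j then of_int (A i j) else 0)"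
proof -
  assume j: "j \<le> n"
  have "lin_poly n (\<lambda>i. if i < j then of_int (A i j) else 0)
      = (\<Sum>i\<in>{1..n}. if i \<in> {1..<j} then Const (of_int (A i j)) * Var i else 0)"
    unfolding lin_poly_def by (rule sum.cong) auto
  also have "\<dots> = (\<Sum>i\<in>{1..n} \<inter> {1..<j}. Const (of_int (A i j)) * Var i)"
    by (simp add: sum.inter_restrict)
  also have "{1..n} \<inter> {1..<j} = {1..<j}" using j by auto
  finally show ?thesis by (simp add: alpha_def)
qed

lemma lin_poly_mult:
  "lin_poly n u * lin_poly n v = (\<Sum>i\<in>{1..n}. \<Sum>k\<in>{1..n}. Poly_Mapping.single (monom2 i k) (u i * v k))"
  by (simp add: lin_poly_def sum_product Const_mult_Var mult_single monom2_def)

lemma monom2_eq_iff: "monom2 i k = monom2 a b \<longleftrightarrow> (i = a \<and> k = b) \<or> (i = b \<and> k = a)"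
proof
  assume e: "monom2 i k = monom2 a b"
  have lk: "Poly_Mapping.lookup (monom2 c d) x = (if c = x then 1 else 0) + (if d = x then 1 else 0)" for c d x
    by (simp add: monom2_def lookup_add lookup_single when_def)
  have l: "Poly_Mapping.lookup (monom2 i k) x = Poly_Mapping.lookup (monom2 a b) x" for x
    using e by simp
  have "i = a \<or> i = b" using l[of i] unfolding lk by (auto split: if_splits)
  moreover have "k = a \<or> k = b" using l[of k] unfolding lk by (auto split: if_splits)
  moreover have "a = i \<or> a = k" using l[of a] unfolding lk by (auto split: if_splits)
  moreover have "b = i \<or> b = k" using l[of b] unfolding lk by (auto split: if_splits)
  ultimately show "(i = a \<and> k = b) \<or> (i = b \<and> k = a)" by blast
qed (auto simp: monom2_def add.commute)

lemma lookup_lin_poly_mult: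
  assumes "a \<in> {1..n}" "b \<in> {1..n}"
  shows "Poly_Mapping.lookup (lin_poly n u * lin_poly n v) (monom2 a b)
       = (if a = b then u a * v a else u a * v b + u b * v a)"
proof -
  have "Poly_Mapping.lookup (lin_poly n u * lin_poly n v) (monom2 a b)
     = (\<Sum>i\<in>{1..n}. \<Sum>k\<in>{1..n}. (u i * v k when (i = a \<and> k = b) \<or> (i = b \<and> k = a)))"
    by (simp add: lin_poly_mult lookup_sum lookup_single monom2_eq_iff)
  also have "\<dots> = (if a = b then u a * v a else u a * v b + u b * v a)"
  proof (cases "a = b")
    case True
    have "(\<Sum>i\<in>{1..n}. \<Sum>k\<in>{1..n}. (u i * v k when (i = a \<and> k = b) \<or> (i = b \<and> k = a)))
        = (\<Sum>i\<in>{1..n}. if i = a then (\<Sum>k\<in>{1..n}. if k = a then u i * v k else 0) else 0)"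
      using True by (intro sum.cong) (auto simp: when_def)
    then show ?thesis using True assms by (simp add: sum.delta)
  next
    case False
    have "(\<Sum>i\<in>{1..n}. \<Sum>k\<in>{1..n}. (u i * v k when (i = a \<and> k = b) \<or> (i = b \<and> k = a)))
        = (\<Sum>i\<in>{1..n}. (if i = a then (\<Sum>k\<in>{1..n}. if k = b then u i * v k else 0) else 0)
                     + (if i = b then (\<Sum>k\<in>{1..n}. if k = a then u i * v k else 0) else 0))"
      using False by (intro sum.cong) (auto simp: when_def sum.distrib[symmetric] intro!: sum.cong)
    then show ?thesis using False assms by (simp add: sum.delta sum.distrib)
  qed
  finally show ?thesis .
qed

lemma polys_in_add: "p \<in> polys_in n \<Longrightarrow> q \<in> polys_in n \<Longrightarrow> p + q \<in> polys_in n"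
  unfolding polys_in_def using keys_add[of p q] by blast

lemma polys_in_uminus: "p \<in> polys_in n \<Longrightarrow> - p \<in> polys_in n"
  unfolding polys_in_def by (simp add: in_keys_iff)

lemma polys_in_diff: "p \<in> polys_in n \<Longrightarrow> q \<in> polys_in n \<Longrightarrow> p - q \<in> polys_in n"
  using polys_in_add[of p n "- q"] polys_in_uminus[of q n] by simp

lemma keys_add_monomial:
  "Poly_Mapping.keys (a + b :: nat \<Rightarrow>\<^sub>0 nat) = Poly_Mapping.keys a \<union> Poly_Mapping.keys b"
  by (auto simp: in_keys_iff lookup_add)

lemma polys_in_mult: "p \<in> polys_in n \<Longrightarrow> q \<in> polys_in n \<Longrightarrow> p * q \<in> polys_in n"
  unfolding polys_in_def using keys_mult[of p q] keys_add_monomial by blast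

lemma polys_in_0: "0 \<in> polys_in n"
  by (simp add: polys_in_def)

lemma polys_in_1: "1 \<in> polys_in n"
  by (simp add: polys_in_def)

lemma polys_in_Const: "Const c \<in> polys_in n"
  by (simp add: polys_in_def Const_def)

lemma polys_in_Var: "i \<in> {1..n} \<Longrightarrow> Var i \<in> polys_in n"
  by (simp add: polys_in_def Var_def)

lemma polys_in_sum: "(\<And>x. x \<in> S \<Longrightarrow> f x \<in> polys_in n) \<Longrightarrow> (\<Sum>x\<in>S. f x) \<in> polys_in n"
  by (induction S rule: infinite_finite_induct) (auto intro: polys_in_add polys_in_0)

lemma polys_in_lin_poly: "lin_poly n u \<in> polys_in n"
  unfolding lin_poly_def by (auto intro!: polys_in_sum polys_in_mult polys_in_Const polys_in_Var)

definition monom_deg :: "(nat \<Rightarrow>\<^sub>0 nat) \<Rightarrow> nat" where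
  "monom_deg m = (\<Sum>i\<in>Poly_Mapping.keys m. Poly_Mapping.lookup m i)"

lemma monom_deg_superset: "finite S \<Longrightarrow> Poly_Mapping.keys m \<subseteq> S \<Longrightarrow> monom_deg m = (\<Sum>i\<in>S. Poly_Mapping.lookup m i)"
  unfolding monom_deg_def by (rule sum.mono_neutral_left) (auto simp: in_keys_iff)

lemma monom_deg_add: "monom_deg (a + b) = monom_deg a + monom_deg b"
proof -
  let ?S = "Poly_Mapping.keys a \<union> Poly_Mapping.keys b"
  have "monom_deg (a + b) = (\<Sum>i\<in>?S. Poly_Mapping.lookup (a + b) i)"
    by (rule monom_deg_superset) (auto simp: keys_add_monomial)
  also have "\<dots> = (\<Sum>i\<in>?S. Poly_Mapping.lookup a i) + (\<Sum>i\<in>?S. Poly_Mapping.lookup b i)"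
    by (simp add: lookup_add sum.distrib)
  also have "\<dots> = monom_deg a + monom_deg b" using monom_deg_superset[of ?S a] monom_deg_superset[of ?S b] by simp
  finally show ?thesis .
qed

lemma monom_deg_eq_0_iff: "monom_deg m = 0 \<longleftrightarrow> m = 0"
proof
  assume "monom_deg m = 0"
  then have "\<forall>i\<in>Poly_Mapping.keys m. Poly_Mapping.lookup m i = 0" by (simp add: monom_deg_def)
  then have "\<forall>i. Poly_Mapping.lookup m i = 0" by (auto simp: in_keys_iff)
  then show "m = 0" by (intro poly_mapping_eqI) simp
qed (simp add: monom_deg_def)

lemma monom_deg_single [simp]: "monom_deg (Poly_Mapping.single i e) = e"
  by (simp add: monom_deg_def)

lemma monom_deg_monom2 [simp]: "monom_deg (monom2 a b) = 2"
  by (simp add: monom2_def monom_deg_add)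

lemma monom_deg_1_single: assumes "monom_deg m = 1" shows "\<exists>i\<in>Poly_Mapping.keys m. m = Poly_Mapping.single i 1"
proof -
  have "Poly_Mapping.keys m \<noteq> {}" using assms by (auto simp: monom_deg_def)
  then obtain i where i: "i \<in> Poly_Mapping.keys m" by blast
  have "monom_deg m = Poly_Mapping.lookup m i + (\<Sum>x\<in>Poly_Mapping.keys m - {i}. Poly_Mapping.lookup m x)"
    unfolding monom_deg_def using i by (simp add: sum.remove)
  moreover have "Poly_Mapping.lookup m i \<ge> 1" using i by (simp add: in_keys_iff)
  ultimately have li: "Poly_Mapping.lookup m i = 1" and rest: "(\<Sum>x\<in>Poly_Mapping.keys m - {i}. Poly_Mapping.lookup m x) = 0"
    using assms by auto
  have "\<forall>x\<in>Poly_Mapping.keys m - {i}. Poly_Mapping.lookup m x = 0" using rest by simp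
  then have "\<forall>x. x \<noteq> i \<longrightarrow> Poly_Mapping.lookup m x = 0" by (auto simp: in_keys_iff)
  then have "m = Poly_Mapping.single i 1"
    by (intro poly_mapping_eqI) (metis li lookup_single_eq lookup_single_not_eq)
  then show ?thesis using i by blast
qed

lemma lin_poly_homog: "lin_poly n u \<in> homog 1"
  unfolding homog_def using keys_lin_poly by (fastforce simp: monom_deg_def[symmetric])

(* In degrees \<le> 2, multiplying by f only sees the constant term of f when r is quadratic. *)
lemma lookup_mult_quadratic:
  assumes r: "\<forall>q\<in>Poly_Mapping.keys r. monom_deg q = 2" and m: "monom_deg m \<le> 2"
  shows "Poly_Mapping.lookup (f * r) m
       = (if monom_deg m = 2 then Poly_Mapping.lookup f 0 * Poly_Mapping.lookup r m else 0)"
proof -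
  have inner: "(\<Sum>q. Poly_Mapping.lookup r q when m = l + q)
             = (Poly_Mapping.lookup r m when l = 0 \<and> monom_deg m = 2)" for l
  proof -
    have "(\<lambda>q. Poly_Mapping.lookup r q when m = l + q)
        = (\<lambda>q. (Poly_Mapping.lookup r m when l = 0 \<and> monom_deg m = 2) when q = m)"
    proof
      fix q
      show "(Poly_Mapping.lookup r q when m = l + q)
          = ((Poly_Mapping.lookup r m when l = 0 \<and> monom_deg m = 2) when q = m)"
      proof (cases "Poly_Mapping.lookup r q = 0")
        case False
        then have q: "monom_deg q = 2" using r by (simp add: in_keys_iff)
        show ?thesis
        proof (cases "m = l + q")
          case True
          then have "monom_deg l = 0" using m q by (simp add: monom_deg_add)
          then show ?thesis using True q by (simp add: when_def monom_deg_eq_0_iff)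
        qed (auto simp: when_def)
      qed (auto simp: when_def)
    qed
    then have "(\<Sum>q. Poly_Mapping.lookup r q when m = l + q)
             = (\<Sum>q. (Poly_Mapping.lookup r m when l = 0 \<and> monom_deg m = 2) when q = m)"
      by (rule arg_cong)
    also have "\<dots> = (Poly_Mapping.lookup r m when l = 0 \<and> monom_deg m = 2)"
      by (rule Sum_any_when_equal)
    finally show ?thesis .
  qed
  have "Poly_Mapping.lookup (f * r) m
      = (\<Sum>l. Poly_Mapping.lookup f l * (Poly_Mapping.lookup r m when l = 0 \<and> monom_deg m = 2))"
    by (simp add: lookup_mult inner)
  also have "\<dots> = (\<Sum>l. (Poly_Mapping.lookup f 0 * Poly_Mapping.lookup r m when monom_deg m = 2)
                        when l = (0::nat \<Rightarrow>\<^sub>0 nat))"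
  proof -
    have "\<forall>l. Poly_Mapping.lookup f l * (Poly_Mapping.lookup r m when l = 0 \<and> monom_deg m = 2)
       = ((Poly_Mapping.lookup f 0 * Poly_Mapping.lookup r m when monom_deg m = 2) when l = 0)"
      by (auto simp: when_def)
    then show ?thesis by (simp only:)
  qed
  finally show ?thesis by (simp add: when_def)
qed

lemma poly_ring_simps [simp]:
  "carrier (poly_ring n) = polys_in n" "monoid.mult (poly_ring n) = (*)" "one (poly_ring n) = 1"
  "zero (poly_ring n) = 0" "add (poly_ring n) = (+)"
  by (simp_all add: poly_ring_def)

lemma cring_poly_ring: "cring (poly_ring n)"
proof (rule cringI)
  show "abelian_group (poly_ring n)"
  proof (rule abelian_groupI)
    fix x assume "x \<in> carrier (poly_ring n)"
    then show "\<exists>y\<in>carrier (poly_ring n). y \<oplus>\<^bsub>poly_ring n\<^esub> x = \<zero>\<^bsub>poly_ring n\<^esub>"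
      by (intro bexI[of _ "- x"]) (simp_all add: polys_in_uminus)
  qed (auto intro: polys_in_add polys_in_0 simp: add.assoc add.commute)
  show "comm_monoid (poly_ring n)"
    by (rule comm_monoidI) (auto intro: polys_in_mult polys_in_1 simp: mult.assoc mult.commute)
qed (simp add: distrib_right)

lemma ring_poly_ring: "ring (poly_ring n)"
  using cring_poly_ring cring.axioms(1) by blast

lemma a_inv_poly_ring: "p \<in> polys_in n \<Longrightarrow> a_inv (poly_ring n) p = - p"
proof -
  interpret cring "poly_ring n" by (rule cring_poly_ring)
  assume p: "p \<in> polys_in n"
  show ?thesis by (rule minus_equality) (simp_all add: p polys_in_uminus)
qed

lemma a_minus_poly_ring: "p \<in> polys_in n \<Longrightarrow> q \<in> polys_in n \<Longrightarrow> a_minus (poly_ring n) p q = p - q"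
  by (simp add: a_minus_def a_inv_poly_ring)

definition deg2_functional :: "(nat \<Rightarrow> nat \<Rightarrow> int) \<Rightarrow> nat \<Rightarrow> nat \<Rightarrow> mpoly \<Rightarrow> rat" where
  "deg2_functional A a b q =
     Poly_Mapping.lookup q (monom2 a b) + of_int (A a b) * Poly_Mapping.lookup q (monom2 b b)"

(* Linear conditions satisfied by every element of the ideal of relations: no terms of degree \<le> 1, and
  for a < b the coefficient of x_a x_b cancels A a b times that of x_b^2, as it does in x_b^2 - alpha_b x_b. *)
definition rel_test :: "nat \<Rightarrow> (nat \<Rightarrow> nat \<Rightarrow> int) \<Rightarrow> mpoly \<Rightarrow> bool" where
  "rel_test n A q \<longleftrightarrow> Poly_Mapping.lookup q 0 = 0 \<and> (\<forall>a. Poly_Mapping.lookup q (Poly_Mapping.single a 1) = 0)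
     \<and> (\<forall>a\<in>{1..n}. \<forall>b\<in>{1..n}. a < b \<longrightarrow> deg2_functional A a b q = 0)"

definition rel_test_ideal :: "nat \<Rightarrow> (nat \<Rightarrow> nat \<Rightarrow> int) \<Rightarrow> mpoly set" where
  "rel_test_ideal n A = {p \<in> polys_in n. \<forall>f\<in>polys_in n. rel_test n A (f * p)}"

lemma rel_test_add: "rel_test n A p \<Longrightarrow> rel_test n A q \<Longrightarrow> rel_test n A (p + q)"
  by (simp add: rel_test_def deg2_functional_def lookup_add algebra_simps)

lemma deg2_functional_uminus: "deg2_functional A a b (- p) = - deg2_functional A a b p"
  by (simp add: deg2_functional_def algebra_simps)

lemma rel_test_uminus: "rel_test n A p \<Longrightarrow> rel_test n A (- p)"
  unfolding rel_test_def deg2_functional_uminus by simp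

lemma rel_test_0: "rel_test n A 0"
  by (simp add: rel_test_def deg2_functional_def)

lemma ideal_rel_test_ideal: "ideal (rel_test_ideal n A) (poly_ring n)"
proof (rule idealI)
  show "ring (poly_ring n)" by (rule ring_poly_ring)
  show "subgroup (rel_test_ideal n A) (add_monoid (poly_ring n))"
  proof (rule subgroup.intro)
    fix x y assume "x \<in> rel_test_ideal n A" "y \<in> rel_test_ideal n A"
    then show "x \<otimes>\<^bsub>add_monoid (poly_ring n)\<^esub> y \<in> rel_test_ideal n A"
      by (auto simp: rel_test_ideal_def polys_in_add distrib_left intro: rel_test_add)
  next
    fix x assume "x \<in> rel_test_ideal n A"
    moreover have "inv\<^bsub>add_monoid (poly_ring n)\<^esub> x = a_inv (poly_ring n) x" by (simp add: a_inv_def)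
    ultimately show "inv\<^bsub>add_monoid (poly_ring n)\<^esub> x \<in> rel_test_ideal n A"
      by (auto simp: rel_test_ideal_def a_inv_poly_ring polys_in_uminus intro: rel_test_uminus)
  qed (auto simp: rel_test_ideal_def polys_in_0 rel_test_0)
next
  fix a x assume "a \<in> rel_test_ideal n A" "x \<in> carrier (poly_ring n)"
  then have "x * a \<in> rel_test_ideal n A"
    by (auto simp: rel_test_ideal_def polys_in_mult mult.assoc[symmetric])
  then show "x \<otimes>\<^bsub>poly_ring n\<^esub> a \<in> rel_test_ideal n A" "a \<otimes>\<^bsub>poly_ring n\<^esub> x \<in> rel_test_ideal n A"
    by (simp_all add: mult.commute)
qed

lemma keys_diff_subset: "Poly_Mapping.keys (p - q) \<subseteq> Poly_Mapping.keys p \<union> Poly_Mapping.keys (q :: mpoly)"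
  by (auto simp: in_keys_iff lookup_minus)

lemma keys_sum_subset: "Poly_Mapping.keys (\<Sum>x\<in>S. f x :: mpoly) \<subseteq> (\<Union>x\<in>S. Poly_Mapping.keys (f x))"
  by (induction S rule: infinite_finite_induct) (auto dest: subsetD[OF keys_add])

lemma keys_lin_poly_mult: "q \<in> Poly_Mapping.keys (lin_poly n u * lin_poly n v) \<Longrightarrow> monom_deg q = 2"
  unfolding lin_poly_mult by (fastforce dest!: subsetD[OF keys_sum_subset] split: if_splits)

lemma rel_poly_eq_lin_poly:
  assumes "j \<in> {1..n}"
  shows "Var j * Var j - alpha A j * Var j
       = lin_poly n (\<lambda>i. if i = j then 1 else 0) * lin_poly n (\<lambda>i. if i = j then 1 else 0)
         - lin_poly n (\<lambda>i. if i < j then of_int (A i j) else 0) * lin_poly n (\<lambda>i. if i = j then 1 else 0)"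
  using assms Var_eq_lin_poly[OF assms] alpha_eq_lin_poly[of j n A] by simp

lemma deg2_functional_rel_poly:
  assumes j: "j \<in> {1..n}" and ab: "a \<in> {1..n}" "b \<in> {1..n}" "a < b"
  shows "deg2_functional A a b (Var j * Var j - alpha A j * Var j) = 0"
proof -
  define e :: "nat \<Rightarrow> rat" where "e = (\<lambda>i. if i = j then 1 else 0)"
  define al :: "nat \<Rightarrow> rat" where "al = (\<lambda>i. if i < j then of_int (A i j) else 0)"
  have "Var j * Var j - alpha A j * Var j = lin_poly n e * lin_poly n e - lin_poly n al * lin_poly n e"
    unfolding e_def al_def by (rule rel_poly_eq_lin_poly[OF j])
  then have "deg2_functional A a b (Var j * Var j - alpha A j * Var j)
      = (e a * e b + e b * e a) - (al a * e b + al b * e a) + of_int (A a b) * (e b * e b - al b * e b)"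
    using ab by (simp add: deg2_functional_def lookup_minus lookup_lin_poly_mult)
  also have "\<dots> = 0" using ab by (auto simp: e_def al_def)
  finally show ?thesis .
qed

lemma rel_poly_in_rel_test_ideal:
  assumes j: "j \<in> {1..n}"
  shows "Var j * Var j - alpha A j * Var j \<in> rel_test_ideal n A"
proof -
  let ?r = "Var j * Var j - alpha A j * Var j"
  have quadratic: "\<forall>q\<in>Poly_Mapping.keys ?r. monom_deg q = 2"
    unfolding rel_poly_eq_lin_poly[OF j] using keys_diff_subset keys_lin_poly_mult by blast
  have "rel_test n A (f * ?r)" for f
  proof -
    have "Poly_Mapping.lookup (f * ?r) 0 = 0"
      using lookup_mult_quadratic[OF quadratic, of 0 f] by (simp add: monom_deg_def)
    moreover have "Poly_Mapping.lookup (f * ?r) (Poly_Mapping.single a 1) = 0" for a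
      using lookup_mult_quadratic[OF quadratic, of "Poly_Mapping.single a 1" f] by simp
    moreover have "deg2_functional A a b (f * ?r) = Poly_Mapping.lookup f 0 * deg2_functional A a b ?r" for a b
      using lookup_mult_quadratic[OF quadratic, of "monom2 a b" f]
        lookup_mult_quadratic[OF quadratic, of "monom2 b b" f]
      by (simp add: deg2_functional_def algebra_simps)
    ultimately show ?thesis using deg2_functional_rel_poly[OF j] by (simp add: rel_test_def)
  qed
  moreover have "?r \<in> polys_in n"
    unfolding rel_poly_eq_lin_poly[OF j] by (intro polys_in_diff polys_in_mult polys_in_lin_poly)
  ultimately show ?thesis by (simp add: rel_test_ideal_def)
qed

lemma bott_rels_subset_rel_test_ideal: "bott_rels n A \<subseteq> rel_test_ideal n A"
  by (auto simp: bott_rels_def rel_poly_in_rel_test_ideal)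

lemma bott_rels_carrier: "bott_rels n A \<subseteq> carrier (poly_ring n)"
  using bott_rels_subset_rel_test_ideal by (auto simp: rel_test_ideal_def)

lemma ideal_bott_ideal: "ideal (bott_ideal n A) (poly_ring n)"
  unfolding bott_ideal_def by (rule ring.genideal_ideal[OF ring_poly_ring bott_rels_carrier])

lemma rel_test_bott_ideal:
  assumes "p \<in> bott_ideal n A"
  shows "rel_test n A p"
proof -
  have "bott_ideal n A \<subseteq> rel_test_ideal n A"
    unfolding bott_ideal_def
    by (rule ring.genideal_minimal[OF ring_poly_ring ideal_rel_test_ideal bott_rels_subset_rel_test_ideal])
  then show ?thesis using assms polys_in_1 by (force simp: rel_test_ideal_def)
qed

lemma rel_poly_in_bott_ideal:
  assumes "j \<in> {1..n}"
  shows "Var j * Var j - alpha A j * Var j \<in> bott_ideal n A"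
  using assms ring.genideal_self[OF ring_poly_ring bott_rels_carrier, of n A]
  unfolding bott_ideal_def bott_rels_def by blast

section \<open>The cohomology ring\<close>

lemma cring_coh: "cring (coh n A)"
  unfolding coh_def by (rule ideal.quotient_is_cring[OF ideal_bott_ideal cring_poly_ring])

lemma ring_coh: "ring (coh n A)"
  using cring_coh cring.axioms(1) by blast

lemma coh_simps:
  "carrier (coh n A) = a_rcosets\<^bsub>poly_ring n\<^esub> (bott_ideal n A)"
  "monoid.mult (coh n A) = rcoset_mult (poly_ring n) (bott_ideal n A)"
  "one (coh n A) = cls n A 1"
  "zero (coh n A) = bott_ideal n A"
  "add (coh n A) = set_add (poly_ring n)"
  by (simp_all add: coh_def FactRing_def cls_def)

lemma cls_carrier: "p \<in> polys_in n \<Longrightarrow> cls n A p \<in> carrier (coh n A)"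
proof -
  interpret ideal "bott_ideal n A" "poly_ring n" by (rule ideal_bott_ideal)
  show "p \<in> polys_in n \<Longrightarrow> ?thesis" unfolding coh_simps cls_def using a_rcosetsI[OF a_subset] by simp
qed

lemma cls_mult:
  "p \<in> polys_in n \<Longrightarrow> q \<in> polys_in n \<Longrightarrow> cls n A p \<otimes>\<^bsub>coh n A\<^esub> cls n A q = cls n A (p * q)"
proof -
  interpret ideal "bott_ideal n A" "poly_ring n" by (rule ideal_bott_ideal)
  show "p \<in> polys_in n \<Longrightarrow> q \<in> polys_in n \<Longrightarrow> ?thesis"
    unfolding coh_simps cls_def using rcoset_mult_add by simp
qed

lemma cls_add:
  "p \<in> polys_in n \<Longrightarrow> q \<in> polys_in n \<Longrightarrow> cls n A p \<oplus>\<^bsub>coh n A\<^esub> cls n A q = cls n A (p + q)"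
proof -
  interpret ideal "bott_ideal n A" "poly_ring n" by (rule ideal_bott_ideal)
  show "p \<in> polys_in n \<Longrightarrow> q \<in> polys_in n \<Longrightarrow> ?thesis"
    unfolding coh_simps cls_def using a_rcos_sum by simp
qed

lemma cls_0: "cls n A 0 = \<zero>\<^bsub>coh n A\<^esub>"
proof -
  interpret ideal "bott_ideal n A" "poly_ring n" by (rule ideal_bott_ideal)
  have "bott_ideal n A +>\<^bsub>poly_ring n\<^esub> \<zero>\<^bsub>poly_ring n\<^esub> = bott_ideal n A"
    by (rule ring.a_rcos_zero[OF ring_poly_ring ideal_bott_ideal]) (rule additive_subgroup.zero_closed[OF ideal.axioms(1)[OF ideal_bott_ideal]])
  then show ?thesis unfolding coh_simps cls_def by simp
qed

lemma cls_1: "cls n A 1 = \<one>\<^bsub>coh n A\<^esub>"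
  by (simp add: coh_simps)

lemma cls_eq_iff:
  "p \<in> polys_in n \<Longrightarrow> q \<in> polys_in n \<Longrightarrow> cls n A p = cls n A q \<longleftrightarrow> p - q \<in> bott_ideal n A"
  using ring.quotient_eq_iff_same_a_r_cos[OF ring_poly_ring ideal_bott_ideal, where a = p and b = q]
  by (simp add: cls_def a_minus_poly_ring)

lemma cls_eq_0_iff: "p \<in> polys_in n \<Longrightarrow> cls n A p = \<zero>\<^bsub>coh n A\<^esub> \<longleftrightarrow> p \<in> bott_ideal n A"
  using cls_eq_iff[of p n 0 A] by (simp add: cls_0 polys_in_0)

lemma cls_uminus: "p \<in> polys_in n \<Longrightarrow> cls n A (- p) = \<ominus>\<^bsub>coh n A\<^esub> cls n A p"
proof -
  interpret cring "coh n A" by (rule cring_coh)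
  assume p: "p \<in> polys_in n"
  have "cls n A (- p) \<oplus>\<^bsub>coh n A\<^esub> cls n A p = \<zero>\<^bsub>coh n A\<^esub>"
    using p by (simp add: cls_add polys_in_uminus cls_0)
  then show ?thesis
    by (intro minus_equality[symmetric]) (simp_all add: p cls_carrier polys_in_uminus)
qed

lemma ideal_diff: "p \<in> bott_ideal n A \<Longrightarrow> q \<in> bott_ideal n A \<Longrightarrow> p - q \<in> bott_ideal n A"
proof -
  interpret ideal "bott_ideal n A" "poly_ring n" by (rule ideal_bott_ideal)
  assume pq: "p \<in> bott_ideal n A" "q \<in> bott_ideal n A"
  have "p \<oplus>\<^bsub>poly_ring n\<^esub> (\<ominus>\<^bsub>poly_ring n\<^esub> q) \<in> bott_ideal n A" using pq by blast
  moreover have "q \<in> polys_in n" using pq a_subset by auto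
  ultimately show ?thesis by (simp add: a_inv_poly_ring)
qed

lemma ideal_mult_left: "c \<in> polys_in n \<Longrightarrow> q \<in> bott_ideal n A \<Longrightarrow> c * q \<in> bott_ideal n A"
proof -
  interpret ideal "bott_ideal n A" "poly_ring n" by (rule ideal_bott_ideal)
  show "c \<in> polys_in n \<Longrightarrow> q \<in> bott_ideal n A \<Longrightarrow> ?thesis" using I_l_closed by simp
qed

locale coh_iso =
  fixes n :: nat and A B :: "nat \<Rightarrow> nat \<Rightarrow> int" and \<psi> :: "mpoly set \<Rightarrow> mpoly set"
  assumes iso: "\<psi> \<in> ring_iso (coh n A) (coh n B)"
begin

sublocale ring_hom_ring "coh n A" "coh n B" \<psi>
  using iso by (intro ring_hom_ringI2 ring_coh) (simp add: ring_iso_def)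

lemma hom_inj: "inj_on \<psi> (carrier (coh n A))"
  using ring_iso_memE(5)[OF iso] bij_betw_def by blast

lemma hom_cls_mult:
  "p \<in> polys_in n \<Longrightarrow> q \<in> polys_in n \<Longrightarrow> \<psi> (cls n A (p * q)) = \<psi> (cls n A p) \<otimes>\<^bsub>coh n B\<^esub> \<psi> (cls n A q)"
  by (simp add: cls_mult[symmetric] cls_carrier)

lemma hom_cls_add:
  "p \<in> polys_in n \<Longrightarrow> q \<in> polys_in n \<Longrightarrow> \<psi> (cls n A (p + q)) = \<psi> (cls n A p) \<oplus>\<^bsub>coh n B\<^esub> \<psi> (cls n A q)"
  by (simp add: cls_add[symmetric] cls_carrier)

lemma hom_cls_Const_of_nat: "\<psi> (cls n A (Const (of_nat k))) = cls n B (Const (of_nat k))"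
proof (induction k)
  case 0
  then show ?case by (simp add: cls_0)
next
  case (Suc k)
  have "Const (of_nat (Suc k)) = Const (of_nat k) + 1" by (simp add: Const_add[symmetric])
  moreover have "\<psi> (cls n A (Const (of_nat k) + 1)) = \<psi> (cls n A (Const (of_nat k))) \<oplus>\<^bsub>coh n B\<^esub> \<psi> (cls n A 1)"
    by (rule hom_cls_add) (simp_all add: polys_in_Const polys_in_1)
  moreover have "cls n B (Const (of_nat k)) \<oplus>\<^bsub>coh n B\<^esub> cls n B 1 = cls n B (Const (of_nat k) + 1)"
    by (rule cls_add) (simp_all add: polys_in_Const polys_in_1)
  ultimately show ?case by (simp add: Suc cls_1)
qed

lemma hom_cls_Const_of_int: "\<psi> (cls n A (Const (of_int k))) = cls n B (Const (of_int k))"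
proof (cases "k \<ge> 0")
  case True
  then obtain m where "k = int m" by (metis nonneg_eq_int)
  then show ?thesis using hom_cls_Const_of_nat[of m] by simp
next
  case False
  then obtain m where k: "k = - int m" by (metis neg_int_cases nat_le_linear not_le of_nat_Suc)
  have "Const (of_int k) = - Const (of_nat m)" by (simp add: k Const_def single_uminus)
  then show ?thesis
    using hom_cls_Const_of_nat[of m] by (simp add: cls_uminus polys_in_Const cls_carrier)
qed

lemma hom_cls_Const: "\<psi> (cls n A (Const c)) = cls n B (Const c)"
proof -
  obtain p q where pq: "quotient_of c = (p, q)" by (cases "quotient_of c") auto
  then have q: "q > 0" and c: "c = of_int p / of_int q"
    using quotient_of_denom_pos quotient_of_div by blast+
  let ?x = "\<psi> (cls n A (Const c))"
  have x: "?x \<in> carrier (coh n B)" by (simp add: cls_carrier polys_in_Const)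
  have "?x \<otimes>\<^bsub>coh n B\<^esub> cls n B (Const (of_int q)) = cls n B (Const (of_int p))"
    using hom_cls_mult[of "Const c" "Const (of_int q)"] q c hom_cls_Const_of_int[of q] hom_cls_Const_of_int[of p]
    by (simp add: polys_in_Const Const_mult)
  then have "?x \<otimes>\<^bsub>coh n B\<^esub> cls n B (Const (of_int q)) \<otimes>\<^bsub>coh n B\<^esub> cls n B (Const (1 / of_int q))
      = cls n B (Const (of_int p)) \<otimes>\<^bsub>coh n B\<^esub> cls n B (Const (1 / of_int q))"
    by simp
  then have "?x \<otimes>\<^bsub>coh n B\<^esub> (cls n B (Const (of_int q)) \<otimes>\<^bsub>coh n B\<^esub> cls n B (Const (1 / of_int q)))
      = cls n B (Const (of_int p) * Const (1 / of_int q))"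
    using x by (simp add: S.m_assoc cls_carrier polys_in_Const cls_mult)
  then have "?x \<otimes>\<^bsub>coh n B\<^esub> \<one>\<^bsub>coh n B\<^esub> = cls n B (Const c)"
    using q c by (simp add: cls_mult polys_in_Const Const_mult cls_1[symmetric])
  then show ?thesis using x by simp
qed

lemma hom_cls_lin_comb:
  assumes "finite S" "\<And>s. s \<in> S \<Longrightarrow> p s \<in> polys_in n" "\<And>s. s \<in> S \<Longrightarrow> p' s \<in> polys_in n"
    "\<And>s. s \<in> S \<Longrightarrow> \<psi> (cls n A (p s)) = cls n B (p' s)"
  shows "\<psi> (cls n A (\<Sum>s\<in>S. Const (c s) * p s)) = cls n B (\<Sum>s\<in>S. Const (c s) * p' s)"
  using assms
proof (induction S rule: finite_induct)
  case empty
  then show ?case by (simp add: cls_0)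
next
  case (insert x F)
  have polys: "(\<Sum>s\<in>F. Const (c s) * p s) \<in> polys_in n" "(\<Sum>s\<in>F. Const (c s) * p' s) \<in> polys_in n"
    "Const (c x) * p x \<in> polys_in n" "Const (c x) * p' x \<in> polys_in n"
    using insert by (auto intro!: polys_in_sum polys_in_mult polys_in_Const)
  have "\<psi> (cls n A (\<Sum>s\<in>insert x F. Const (c s) * p s))
      = \<psi> (cls n A (Const (c x) * p x)) \<oplus>\<^bsub>coh n B\<^esub> \<psi> (cls n A (\<Sum>s\<in>F. Const (c s) * p s))"
    using insert polys by (simp add: hom_cls_add)
  also have "\<psi> (cls n A (Const (c x) * p x)) = cls n B (Const (c x) * p' x)"
    using insert hom_cls_Const[of "c x"] by (simp add: hom_cls_mult polys_in_Const cls_mult)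
  also have "\<psi> (cls n A (\<Sum>s\<in>F. Const (c s) * p s)) = cls n B (\<Sum>s\<in>F. Const (c s) * p' s)"
    using insert by auto
  finally show ?case using insert polys by (simp add: cls_add)
qed

end

section \<open>The basis y\<close>

definition ycoeff :: "(nat \<Rightarrow> nat \<Rightarrow> int) \<Rightarrow> nat \<Rightarrow> nat \<Rightarrow> rat" where
  "ycoeff A j i = (if i = j then 1 else 0) - (if i < j then of_int (A i j) / 2 else 0)"

definition ycomb :: "nat \<Rightarrow> (nat \<Rightarrow> nat \<Rightarrow> int) \<Rightarrow> (nat \<Rightarrow> rat) \<Rightarrow> mpoly" where
  "ycomb n A d = (\<Sum>i\<in>{1..n}. Const (d i) * ypoly A i)"

definition yspan :: "(nat \<Rightarrow> nat \<Rightarrow> int) \<Rightarrow> nat \<Rightarrow> mpoly set" where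
  "yspan A j = {p. \<exists>d. p = (\<Sum>i\<in>{1..<j}. Const (d i) * ypoly A i)}"

definition yquad :: "nat \<Rightarrow> (nat \<Rightarrow> nat \<Rightarrow> int) \<Rightarrow> (nat \<Rightarrow> nat \<Rightarrow> rat) \<Rightarrow> mpoly" where
  "yquad n A S = (\<Sum>a\<in>{1..n}. \<Sum>b\<in>{1..n}. Const (S a b) * (ypoly A a * ypoly A b))"

lemma ypoly_eq_lin_poly:
  assumes "j \<in> {1..n}"
  shows "ypoly A j = lin_poly n (ycoeff A j)"
proof -
  have "ypoly A j = lin_poly n (\<lambda>i. if i = j then 1 else 0)
                  - Const (1/2) * lin_poly n (\<lambda>i. if i < j then of_int (A i j) else 0)"
    using assms by (simp add: ypoly_def Var_eq_lin_poly[OF assms] alpha_eq_lin_poly)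
  also have "\<dots> = lin_poly n (\<lambda>i. (if i = j then 1 else 0) - 1/2 * (if i < j then of_int (A i j) else 0))"
    by (simp add: Const_mult_lin_poly lin_poly_diff)
  also have "(\<lambda>i. (if i = j then 1 else 0) - 1/2 * (if i < j then of_int (A i j) else 0)) = ycoeff A j"
    by (auto simp: ycoeff_def fun_eq_iff)
  finally show ?thesis .
qed

lemma ycomb_eq_lin_poly: "ycomb n A d = lin_poly n (\<lambda>a. \<Sum>i\<in>{1..n}. d i * ycoeff A i a)"
proof -
  have "ycomb n A d = (\<Sum>i\<in>{1..n}. lin_poly n (\<lambda>a. d i * ycoeff A i a))"
    unfolding ycomb_def
  proof (rule sum.cong[OF refl])
    fix i assume "i \<in> {1..n}"
    then show "Const (d i) * ypoly A i = lin_poly n (\<lambda>a. d i * ycoeff A i a)"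
      using ypoly_eq_lin_poly[of i n A] Const_mult_lin_poly by simp
  qed
  then show ?thesis by (simp add: sum_lin_poly)
qed

lemma ycoeff_upper: "i \<le> m \<Longrightarrow> ycoeff A i m = (if i = m then 1 else 0)"
  by (auto simp: ycoeff_def)

lemma polys_in_ycomb: "ycomb n A d \<in> polys_in n"
  by (simp add: ycomb_eq_lin_poly polys_in_lin_poly)

lemma polys_in_ypoly: "i \<in> {1..n} \<Longrightarrow> ypoly A i \<in> polys_in n"
  using ypoly_eq_lin_poly polys_in_lin_poly by metis

lemma ycomb_0: "ycomb n A (\<lambda>k. 0) = 0"
  by (simp add: ycomb_def)

lemma ycomb_unit: "j \<in> {1..n} \<Longrightarrow> ycomb n A (\<lambda>i. if i = j then 1 else 0) = ypoly A j"
proof -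
  assume j: "j \<in> {1..n}"
  have "ycomb n A (\<lambda>i. if i = j then 1 else 0) = (\<Sum>i\<in>{1..n}. if i = j then ypoly A i else 0)"
    unfolding ycomb_def by (rule sum.cong) auto
  then show ?thesis using j by (simp add: sum.delta)
qed

lemma sum_Const_mult_ycomb:
  "(\<Sum>i\<in>S. Const (v i) * ycomb n A (f i)) = ycomb n A (\<lambda>k. \<Sum>i\<in>S. v i * f i k)"
proof (induction S rule: infinite_finite_induct)
  case (insert x F)
  have "Const (v x) * ycomb n A (f x) + ycomb n A (\<lambda>k. \<Sum>i\<in>F. v i * f i k)
      = ycomb n A (\<lambda>k. v x * f x k + (\<Sum>i\<in>F. v i * f i k))"
    by (simp add: ycomb_def sum_distrib_left sum.distrib[symmetric] mult.assoc[symmetric] Const_mult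
        Const_add[symmetric] distrib_right)
  then show ?case using insert by simp
qed (simp_all add: ycomb_def)

(* The y_i are linearly independent modulo the ideal, because x_m has coefficient 1 in y_m and none
  in y_i for i < m, while the ideal contains no linear terms. *)
lemma ycomb_in_bott_ideal_zero:
  assumes ideal: "ycomb n A d \<in> bott_ideal n A" and i: "i \<in> {1..n}"
  shows "d i = 0"
proof (rule ccontr)
  assume "d i \<noteq> 0"
  then obtain m where m: "m \<in> {1..n}" "d m \<noteq> 0" "\<forall>k\<in>{1..n}. d k \<noteq> 0 \<longrightarrow> k \<le> m"
    using max_nonzero_coeff[of "{1..n}" i d] i by auto
  have "(\<Sum>k\<in>{1..n}. d k * ycoeff A k m) = (\<Sum>k\<in>{1..n}. if k = m then d m else 0)"
    using m(3) by (intro sum.cong) (auto simp: ycoeff_upper)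
  also have "\<dots> = d m" using m(1) by simp
  finally have "Poly_Mapping.lookup (ycomb n A d) (Poly_Mapping.single m 1) = d m"
    unfolding ycomb_eq_lin_poly lookup_lin_poly_single[OF m(1)] .
  moreover have "Poly_Mapping.lookup (ycomb n A d) (Poly_Mapping.single m 1) = 0"
    using rel_test_bott_ideal[OF ideal] by (simp add: rel_test_def)
  ultimately show False using m(2) by simp
qed

lemma yspan_add: "p \<in> yspan A j \<Longrightarrow> q \<in> yspan A j \<Longrightarrow> p + q \<in> yspan A j"
proof -
  assume "p \<in> yspan A j" "q \<in> yspan A j"
  then obtain d e where "p = (\<Sum>i\<in>{1..<j}. Const (d i) * ypoly A i)" "q = (\<Sum>i\<in>{1..<j}. Const (e i) * ypoly A i)"
    by (auto simp: yspan_def)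
  then have "p + q = (\<Sum>i\<in>{1..<j}. Const (d i + e i) * ypoly A i)"
    by (simp add: sum.distrib[symmetric] Const_add[symmetric] distrib_right)
  then show ?thesis by (auto simp: yspan_def)
qed

lemma yspan_Const_mult: "p \<in> yspan A j \<Longrightarrow> Const c * p \<in> yspan A j"
proof -
  assume "p \<in> yspan A j"
  then obtain d where "p = (\<Sum>i\<in>{1..<j}. Const (d i) * ypoly A i)" by (auto simp: yspan_def)
  then have "Const c * p = (\<Sum>i\<in>{1..<j}. Const (c * d i) * ypoly A i)"
    by (simp add: sum_distrib_left mult.assoc[symmetric] Const_mult)
  then show ?thesis by (auto simp: yspan_def)
qed

lemma yspan_0: "0 \<in> yspan A j"
  unfolding yspan_def by (auto intro!: exI[of _ "\<lambda>i. 0"])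

lemma yspan_sum: "(\<And>s. s \<in> S \<Longrightarrow> p s \<in> yspan A j) \<Longrightarrow> (\<Sum>s\<in>S. Const (c s) * p s) \<in> yspan A j"
  by (induction S rule: infinite_finite_induct) (auto intro: yspan_add yspan_Const_mult yspan_0)

lemma yspan_mono: "j \<le> j' \<Longrightarrow> yspan A j \<subseteq> yspan A j'"
proof
  fix p assume j: "j \<le> j'" and "p \<in> yspan A j"
  then obtain d where d: "p = (\<Sum>i\<in>{1..<j}. Const (d i) * ypoly A i)" by (auto simp: yspan_def)
  have "(\<Sum>i\<in>{1..<j'}. Const (if i < j then d i else 0) * ypoly A i) = (\<Sum>i\<in>{1..<j}. Const (d i) * ypoly A i)"
    by (rule sum.mono_neutral_cong_right) (use j in auto)
  then have "p = (\<Sum>i\<in>{1..<j'}. Const (if i < j then d i else 0) * ypoly A i)" using d by simp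
  then show "p \<in> yspan A j'" unfolding yspan_def by (intro CollectI exI)
qed

lemma ypoly_in_yspan: "i \<in> {1..<j} \<Longrightarrow> ypoly A i \<in> yspan A j"
proof -
  assume i: "i \<in> {1..<j}"
  have "(\<Sum>k\<in>{1..<j}. Const (if k = i then 1 else 0) * ypoly A k) = (\<Sum>k\<in>{1..<j}. if k = i then ypoly A k else 0)"
    by (rule sum.cong) auto
  also have "\<dots> = ypoly A i" using i by (simp add: sum.delta)
  finally have "ypoly A i = (\<Sum>k\<in>{1..<j}. Const (if k = i then 1 else 0) * ypoly A k)" by simp
  then show ?thesis unfolding yspan_def by (intro CollectI exI)
qed

lemma half_alpha_eq: "Const (1/2) * alpha A i = (\<Sum>l\<in>{1..<i}. Const (of_int (A l i) / 2) * Var l)"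
  by (simp add: alpha_def sum_distrib_left mult.assoc[symmetric] Const_mult)

(* x_i = y_i + alpha_i / 2, and alpha_i only involves x_l with l < i *)
lemma Var_in_yspan: "1 \<le> i \<Longrightarrow> i < j \<Longrightarrow> Var i \<in> yspan A j"
proof (induction i arbitrary: j rule: less_induct)
  case (less i)
  have "Const (1/2) * alpha A i \<in> yspan A j"
    unfolding half_alpha_eq
    using less yspan_mono[of i j A] by (intro yspan_sum) auto
  moreover have "ypoly A i \<in> yspan A j" using less.prems by (intro ypoly_in_yspan) auto
  ultimately show ?case using yspan_add by (fastforce simp: ypoly_def)
qed

lemma half_alpha_in_yspan: "Const (1/2) * alpha A j \<in> yspan A j"
  unfolding half_alpha_eq by (rule yspan_sum) (auto intro: Var_in_yspan)

lemma lin_poly_in_yspan: "lin_poly n u \<in> yspan A (Suc n)"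
  unfolding lin_poly_def by (rule yspan_sum) (auto intro: Var_in_yspan)

lemma yspan_Suc_eq_ycomb: "p \<in> yspan A (Suc n) \<Longrightarrow> \<exists>d. p = ycomb n A d"
  by (auto simp: yspan_def ycomb_def atLeastLessThanSuc_atLeastAtMost)

lemma lin_poly_lookup_repr:
  assumes "p \<in> polys_in n" "p \<in> homog 1"
  shows "p = lin_poly n (\<lambda>a. Poly_Mapping.lookup p (Poly_Mapping.single a 1))"
proof (rule poly_mapping_eqI)
  fix m
  show "Poly_Mapping.lookup p m = Poly_Mapping.lookup (lin_poly n (\<lambda>a. Poly_Mapping.lookup p (Poly_Mapping.single a 1))) m"
  proof (cases "m \<in> Poly_Mapping.keys p")
    case True
    then have "monom_deg m = 1" using assms(2) by (simp add: homog_def monom_deg_def)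
    then obtain k where k: "k \<in> Poly_Mapping.keys m" "m = Poly_Mapping.single k 1"
      using monom_deg_1_single by blast
    then have "k \<in> {1..n}" using assms(1) True unfolding polys_in_def by blast
    show ?thesis unfolding k(2) lookup_lin_poly_single[OF \<open>k \<in> {1..n}\<close>] ..
  next
    case False
    then have z: "Poly_Mapping.lookup p m = 0" by (simp add: in_keys_iff)
    then have "(Poly_Mapping.lookup p (Poly_Mapping.single i 1) when Poly_Mapping.single i (1::nat) = m) = 0" for i
      by (auto simp: when_def)
    then show ?thesis using z by (simp add: lookup_lin_poly)
  qed
qed

lemma ycls_in_coh_deg_1: "i \<in> {1..n} \<Longrightarrow> ycls n A i \<in> coh_deg n A 1"
  unfolding ycls_def coh_deg_def
  using polys_in_ypoly[of i n A] ypoly_eq_lin_poly[of i n A] lin_poly_homog by auto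

lemma coh_deg_1_ycomb: "x \<in> coh_deg n B 1 \<Longrightarrow> \<exists>d. x = cls n B (ycomb n B d)"
proof -
  assume "x \<in> coh_deg n B 1"
  then obtain p where p: "x = cls n B p" "p \<in> polys_in n" "p \<in> homog 1" by (auto simp: coh_deg_def)
  then have "p \<in> yspan B (Suc n)" using lin_poly_lookup_repr lin_poly_in_yspan by metis
  then show ?thesis using p yspan_Suc_eq_ycomb by blast
qed

lemma ycomb_column_at:
  assumes "k \<in> {1..n}" "column_at {1..n} M i k"
  shows "ycomb n A (\<lambda>b. M b i) = Const (M k i) * ypoly A k"
proof -
  have "ycomb n A (\<lambda>b. M b i) = (\<Sum>b\<in>{1..n}. if b = k then Const (M k i) * ypoly A k else 0)"
    unfolding ycomb_def by (rule sum.cong) (use assms in \<open>auto simp: column_at_def\<close>)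
  then show ?thesis using assms(1) by simp
qed

section \<open>Quadratic relations in the basis y\<close>

definition half_alpha_ycoeff :: "(nat \<Rightarrow> nat \<Rightarrow> int) \<Rightarrow> nat \<Rightarrow> nat \<Rightarrow> rat" where
  "half_alpha_ycoeff A j = (SOME d. Const (1/2) * alpha A j = (\<Sum>i\<in>{1..<j}. Const (d i) * ypoly A i))"

lemma half_alpha_eq_ycomb:
  assumes "j \<in> {1..n}"
  shows "Const (1/2) * alpha A j = ycomb n A (gamma_coeff (half_alpha_ycoeff A) j)"
proof -
  have "\<exists>d. Const (1/2) * alpha A j = (\<Sum>i\<in>{1..<j}. Const (d i) * ypoly A i)"
    using half_alpha_in_yspan[of A j] by (simp add: yspan_def)
  then have "Const (1/2) * alpha A j = (\<Sum>i\<in>{1..<j}. Const (half_alpha_ycoeff A j i) * ypoly A i)"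
    unfolding half_alpha_ycoeff_def by (rule someI_ex)
  also have "\<dots> = ycomb n A (gamma_coeff (half_alpha_ycoeff A) j)"
    unfolding ycomb_def gamma_coeff_def by (rule sum.mono_neutral_cong_left) (use assms in auto)
  finally show ?thesis .
qed

lemma ycomb_mult_self:
  "ycomb n A x * ycomb n A x = (\<Sum>a\<in>{1..n}. \<Sum>b\<in>{1..n}. Const (x a * x b) * (ypoly A a * ypoly A b))"
  unfolding ycomb_def sum_product by (simp add: Const_mult[symmetric] algebra_simps)

lemma yquad_diff_squares:
  "yquad n A (\<lambda>a b. x a * x b - z a * z b) = ycomb n A x * ycomb n A x - ycomb n A z * ycomb n A z"
  unfolding yquad_def ycomb_mult_self by (simp add: Const_diff[symmetric] left_diff_distrib sum_subtractf)

lemma yquad_diff: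
  "yquad n A (\<lambda>a b. S a b - c * T a b) = yquad n A S - Const c * yquad n A T"
  unfolding yquad_def
  by (simp add: Const_diff[symmetric] Const_mult[symmetric] left_diff_distrib sum_subtractf
      sum_distrib_left mult.assoc)

lemma ypoly_sq_minus_half_alpha_sq:
  "ypoly A j * ypoly A j - (Const (1/2) * alpha A j) * (Const (1/2) * alpha A j)
     = Var j * Var j - alpha A j * Var j"
proof -
  have two: "Const (1/2) * 2 = (1::mpoly)"
  proof -
    have e: "(2::mpoly) = Const 2" by (simp add: Const_def)
    show ?thesis by (subst e) (simp add: Const_mult)
  qed
  have "ypoly A j * ypoly A j - (Const (1/2) * alpha A j) * (Const (1/2) * alpha A j)
      = Var j * Var j - (Const (1/2) * 2) * alpha A j * Var j"
    by (simp add: ypoly_def algebra_simps)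
  then show ?thesis using two by simp
qed

lemma yquad_rel_form_in_bott_ideal:
  assumes "j \<in> {1..n}"
  shows "yquad n A (rel_form (half_alpha_ycoeff A) j) \<in> bott_ideal n A"
proof -
  have "rel_form (half_alpha_ycoeff A) j
      = (\<lambda>a b. (if a = j then 1 else 0) * (if b = j then 1 else 0)
               - gamma_coeff (half_alpha_ycoeff A) j a * gamma_coeff (half_alpha_ycoeff A) j b)"
    by (auto simp: rel_form_def fun_eq_iff)
  then have "yquad n A (rel_form (half_alpha_ycoeff A) j) = Var j * Var j - alpha A j * Var j"
    using assms
    by (simp add: yquad_diff_squares ycomb_unit half_alpha_eq_ycomb[symmetric] ypoly_sq_minus_half_alpha_sq)
  then show ?thesis using rel_poly_in_bott_ideal[OF assms] by simp
qed

lemma deg2_functional_yquad: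
  assumes a: "a \<in> {1..n}" and t: "t \<in> {1..n}" and lt: "a < t"
  shows "deg2_functional A a t (yquad n A D) = (\<Sum>c\<in>{1..n}. \<Sum>d\<in>{1..n}. D c d *
     (ycoeff A c a * ycoeff A d t + ycoeff A c t * ycoeff A d a + of_int (A a t) * (ycoeff A c t * ycoeff A d t)))"
proof -
  have yy: "ypoly A c * ypoly A d = lin_poly n (ycoeff A c) * lin_poly n (ycoeff A d)"
    if "c \<in> {1..n}" "d \<in> {1..n}" for c d
    by (simp only: ypoly_eq_lin_poly[OF that(1)] ypoly_eq_lin_poly[OF that(2)])
  have l1: "Poly_Mapping.lookup (yquad n A D) (monom2 a t)
      = (\<Sum>c\<in>{1..n}. \<Sum>d\<in>{1..n}. D c d * (ycoeff A c a * ycoeff A d t + ycoeff A c t * ycoeff A d a))"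
    unfolding yquad_def lookup_sum lookup_Const_mult
    by (intro sum.cong refl) (use a t lt in \<open>simp add: yy lookup_lin_poly_mult\<close>)
  have l2: "Poly_Mapping.lookup (yquad n A D) (monom2 t t)
      = (\<Sum>c\<in>{1..n}. \<Sum>d\<in>{1..n}. D c d * (ycoeff A c t * ycoeff A d t))"
    unfolding yquad_def lookup_sum lookup_Const_mult
    by (intro sum.cong refl) (use t in \<open>simp add: yy lookup_lin_poly_mult\<close>)
  show ?thesis unfolding deg2_functional_def l1 l2
    by (simp add: sum_distrib_left sum.distrib[symmetric] algebra_simps)
qed

(* As D vanishes beyond t and at (t, t), and y_t is the only y_i involving x_t, only the entries
  (a0, t) and (t, a0) contribute. *)
lemma deg2_functional_yquad_last_column:
  fixes D :: "nat \<Rightarrow> nat \<Rightarrow> rat"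
  assumes t: "t \<in> {1..n}" and a0: "a0 \<in> {1..n}" "a0 < t"
    and sym: "\<forall>a\<in>{1..n}. \<forall>b\<in>{1..n}. D a b = D b a"
    and supp: "\<forall>a\<in>{1..n}. \<forall>b\<in>{1..n}. (t < a \<or> t < b) \<longrightarrow> D a b = 0" and Dtt: "D t t = 0"
    and col: "\<And>c. c \<in> {1..n} \<Longrightarrow> D c t \<noteq> 0 \<Longrightarrow> c \<le> a0"
  shows "deg2_functional A a0 t (yquad n A D) = D a0 t + D a0 t"
proof -
  have entry: "D c d * (ycoeff A c a0 * ycoeff A d t + ycoeff A c t * ycoeff A d a0
                + of_int (A a0 t) * (ycoeff A c t * ycoeff A d t))
            = (if c = a0 then (if d = t then D a0 t else 0) else 0)
              + (if c = t then (if d = a0 then D a0 t else 0) else 0)"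
    if cd: "c \<in> {1..n}" "d \<in> {1..n}" for c d
  proof (cases "D c d = 0")
    case True
    then show ?thesis using sym cd by auto
  next
    case False
    have "c \<le> t" "d \<le> t" using supp cd False by (meson not_less)+
    moreover have "\<not> (c = t \<and> d = t)" using False Dtt by auto
    ultimately consider "d = t" "c < t" | "c = t" "d < t" | "c < t" "d < t" by linarith
    then show ?thesis
    proof cases
      case 1
      then have "c \<le> a0" using col cd False by blast
      then show ?thesis using 1 a0 by (simp add: ycoeff_upper)
    next
      case 2
      then have "D d t = D c d" using sym cd by simp
      then have "d \<le> a0" using col cd False by simp
      then show ?thesis using 2 a0 sym cd by (auto simp: ycoeff_upper)
    next
      case 3
      then show ?thesis by (simp add: ycoeff_upper)
    qed
  qed
  have "deg2_functional A a0 t (yquad n A D)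
      = (\<Sum>c\<in>{1..n}. \<Sum>d\<in>{1..n}. (if c = a0 then (if d = t then D a0 t else 0) else 0)
                                  + (if c = t then (if d = a0 then D a0 t else 0) else 0))"
    unfolding deg2_functional_yquad[OF a0(1) t a0(2)] by (intro sum.cong refl) (simp add: entry)
  also have "\<dots> = (\<Sum>c\<in>{1..n}. (if c = a0 then D a0 t else 0) + (if c = t then D a0 t else 0))"
    using a0 t by (intro sum.cong refl) (simp add: sum.distrib)
  also have "\<dots> = D a0 t + D a0 t"
    using a0 t by (simp add: sum.distrib)
  finally show ?thesis .
qed

lemma yquad_in_bott_ideal_last_column:
  fixes D :: "nat \<Rightarrow> nat \<Rightarrow> rat"
  assumes t: "t \<in> {1..n}"
    and sym: "\<forall>a\<in>{1..n}. \<forall>b\<in>{1..n}. D a b = D b a"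
    and supp: "\<forall>a\<in>{1..n}. \<forall>b\<in>{1..n}. (t < a \<or> t < b) \<longrightarrow> D a b = 0" and Dtt: "D t t = 0"
    and ideal: "yquad n A D \<in> bott_ideal n A"
    and a: "a \<in> {1..n}" "a < t"
  shows "D a t = 0"
proof (rule ccontr)
  assume "D a t \<noteq> 0"
  then obtain a0 where a0: "a0 \<in> {c\<in>{1..n}. c < t}" "D a0 t \<noteq> 0"
    and a0_max: "\<forall>c\<in>{c\<in>{1..n}. c < t}. D c t \<noteq> 0 \<longrightarrow> c \<le> a0"
    using max_nonzero_coeff[of "{c\<in>{1..n}. c < t}" a "\<lambda>c. D c t"] a by auto
  have col: "c \<le> a0" if c: "c \<in> {1..n}" "D c t \<noteq> 0" for c
  proof -
    have "c < t"
    proof (rule ccontr)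
      assume "\<not> c < t"
      then have "t < c \<or> c = t" by linarith
      then show False using supp c t Dtt by auto
    qed
    then show ?thesis using a0_max c by blast
  qed
  have a0': "a0 \<in> {1..n}" "a0 < t" using a0 by auto
  have "D a0 t + D a0 t = 0"
    using deg2_functional_yquad_last_column[OF t a0' sym supp Dtt col, of A] rel_test_bott_ideal[OF ideal] a0' t
    by (simp add: rel_test_def)
  then show False using a0 by simp
qed

lemma sym_support_below_Suc:
  fixes D :: "nat \<Rightarrow> nat \<Rightarrow> 'a::zero"
  assumes sym: "\<forall>a\<in>I. \<forall>b\<in>I. D a b = D b a"
    and supp: "\<forall>a\<in>I. \<forall>b\<in>I. (Suc t < a \<or> Suc t < b) \<longrightarrow> D a b = 0"
    and Dtt: "D (Suc t) (Suc t) = 0" and col: "\<And>a. a \<in> I \<Longrightarrow> a < Suc t \<Longrightarrow> D a (Suc t) = 0"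
  shows "\<forall>a\<in>I. \<forall>b\<in>I. (t < a \<or> t < b) \<longrightarrow> D a b = 0"
proof (intro ballI impI)
  fix a b assume ab: "a \<in> I" "b \<in> I" "t < a \<or> t < b"
  show "D a b = 0"
  proof (cases "Suc t < a \<or> Suc t < b")
    case True
    then show ?thesis using supp ab by blast
  next
    case False
    then consider "a = Suc t" "b = Suc t" | "a = Suc t" "b < Suc t" | "b = Suc t" "a < Suc t"
      using ab(3) by linarith
    then show ?thesis
    proof cases
      case 1
      then show ?thesis using Dtt by simp
    next
      case 2
      then show ?thesis using col[OF ab(2)] sym ab(1,2) by simp
    next
      case 3
      then show ?thesis using col[OF ab(1)] by simp
    qed
  qed
qed

lemma yquad_in_bott_ideal_in_rel_span_upto:
  fixes S :: "nat \<Rightarrow> nat \<Rightarrow> rat"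
  assumes "\<forall>a\<in>{1..n}. \<forall>b\<in>{1..n}. S a b = S b a"
    and "\<forall>a\<in>{1..n}. \<forall>b\<in>{1..n}. (t < a \<or> t < b) \<longrightarrow> S a b = 0"
    and "yquad n A S \<in> bott_ideal n A"
  shows "in_rel_span {1..n} (half_alpha_ycoeff A) S"
  using assms
proof (induction t arbitrary: S)
  case 0
  then show ?case by (intro in_rel_span_cong[OF in_rel_span_zero]) auto
next
  case (Suc t)
  let ?g = "half_alpha_ycoeff A" and ?N = "{1..n}"
  show ?case
  proof (cases "Suc t \<in> ?N")
    case False
    then have "\<forall>a\<in>?N. \<forall>b\<in>?N. (t < a \<or> t < b) \<longrightarrow> S a b = 0" using Suc.prems(2) by auto
    then show ?thesis using Suc.IH Suc.prems(1,3) by blast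
  next
    case t: True
    define D where "D a b = S a b - S (Suc t) (Suc t) * rel_form ?g (Suc t) a b" for a b
    have sym: "\<forall>a\<in>?N. \<forall>b\<in>?N. D a b = D b a"
      using Suc.prems(1) by (simp add: D_def rel_form_sym)
    have supp: "\<forall>a\<in>?N. \<forall>b\<in>?N. (Suc t < a \<or> Suc t < b) \<longrightarrow> D a b = 0"
      using Suc.prems(2) by (auto simp: D_def rel_form_def gamma_coeff_def)
    have Dtt: "D (Suc t) (Suc t) = 0" by (simp add: D_def rel_form_def gamma_coeff_def)
    have ideal: "yquad n A D \<in> bott_ideal n A"
      unfolding D_def yquad_diff using t Suc.prems(3)
      by (intro ideal_diff ideal_mult_left polys_in_Const yquad_rel_form_in_bott_ideal)
    have "D a (Suc t) = 0" if "a \<in> ?N" "a < Suc t" for a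
      by (rule yquad_in_bott_ideal_last_column[OF t sym supp Dtt ideal that])
    then have "in_rel_span ?N ?g D"
      using Suc.IH sym ideal sym_support_below_Suc[OF sym supp Dtt] by blast
    then have "in_rel_span ?N ?g (\<lambda>a b. D a b + S (Suc t) (Suc t) * rel_form ?g (Suc t) a b)"
      using t by (intro in_rel_span_add in_rel_span_smult in_rel_span_rel_form) auto
    then show ?thesis by (rule in_rel_span_cong) (simp add: D_def)
  qed
qed

lemma yquad_in_bott_ideal_in_rel_span:
  assumes "\<forall>a\<in>{1..n}. \<forall>b\<in>{1..n}. S a b = S b a" "yquad n A S \<in> bott_ideal n A"
  shows "in_rel_span {1..n} (half_alpha_ycoeff A) S"
  using yquad_in_bott_ideal_in_rel_span_upto[of n S n] assms by auto

section \<open>The matrix of a graded isomorphism\<close>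

locale graded_coh_iso = coh_iso +
  assumes graded: "\<psi> ` coh_deg n A d \<subseteq> coh_deg n B d"
begin

(* Column i holds the coordinates of \<psi>(y^A_i) in the basis y^B of H^2(M(B)). *)
definition iso_matrix :: "nat \<Rightarrow> nat \<Rightarrow> rat" where
  "iso_matrix k i = (SOME d. \<psi> (ycls n A i) = cls n B (ycomb n B d)) k"

lemma hom_ycls: "i \<in> {1..n} \<Longrightarrow> \<psi> (ycls n A i) = cls n B (ycomb n B (\<lambda>k. iso_matrix k i))"
proof -
  assume "i \<in> {1..n}"
  then have "\<psi> (ycls n A i) \<in> coh_deg n B 1" using graded ycls_in_coh_deg_1 by blast
  then have "\<exists>d. \<psi> (ycls n A i) = cls n B (ycomb n B d)" by (rule coh_deg_1_ycomb)
  then show ?thesis unfolding iso_matrix_def by (rule someI_ex)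
qed

lemma hom_cls_ycomb:
  "\<psi> (cls n A (ycomb n A v)) = cls n B (ycomb n B (\<lambda>k. \<Sum>i\<in>{1..n}. v i * iso_matrix k i))"
proof -
  have "\<psi> (cls n A (\<Sum>i\<in>{1..n}. Const (v i) * ypoly A i))
      = cls n B (\<Sum>i\<in>{1..n}. Const (v i) * ycomb n B (\<lambda>k. iso_matrix k i))"
    by (rule hom_cls_lin_comb) (auto simp: polys_in_ypoly polys_in_ycomb hom_ycls[unfolded ycls_def])
  then show ?thesis by (simp add: ycomb_def[of n A] sum_Const_mult_ycomb)
qed

lemma inj_matrix_iso_matrix: "inj_matrix {1..n} {1..n} iso_matrix"
  unfolding inj_matrix_def
proof (intro allI impI)
  fix v assume v: "\<forall>a\<in>{1..n}. (\<Sum>i\<in>{1..n}. iso_matrix a i * v i) = 0"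
  have "ycomb n B (\<lambda>k. \<Sum>i\<in>{1..n}. v i * iso_matrix k i) = ycomb n B (\<lambda>k. 0)"
    unfolding ycomb_def using v by (intro sum.cong refl) (simp add: mult.commute)
  then have "\<psi> (cls n A (ycomb n A v)) = \<psi> (cls n A 0)"
    by (simp add: hom_cls_ycomb ycomb_0 cls_0)
  then have "cls n A (ycomb n A v) = cls n A 0"
    by (rule inj_onD[OF hom_inj]) (simp_all add: cls_carrier polys_in_ycomb polys_in_0)
  then have "ycomb n A v \<in> bott_ideal n A"
    using cls_eq_0_iff[OF polys_in_ycomb] by (simp add: cls_0)
  then show "\<forall>i\<in>{1..n}. v i = 0" using ycomb_in_bott_ideal_zero by blast
qed

(* \<psi>(y_j)^2 - \<psi>(alpha_j / 2)^2 lies in the ideal of M(B), and its Gram matrix in the basis y^B is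
  M (rel_form j) M\<^sup>T. *)
lemma congr_rel_form_iso_matrix:
  assumes j: "j \<in> {1..n}"
  shows "in_rel_span {1..n} (half_alpha_ycoeff B) (congr_form {1..n} iso_matrix (rel_form (half_alpha_ycoeff A) j))"
proof -
  define x where "x = (\<lambda>k. iso_matrix k j)"
  define z where "z = (\<lambda>k. \<Sum>i\<in>{1..n}. iso_matrix k i * gamma_coeff (half_alpha_ycoeff A) j i)"
  define y where "y = ypoly A j"
  define \<gamma> where "\<gamma> = ycomb n A (gamma_coeff (half_alpha_ycoeff A) j)"
  have polys: "y \<in> polys_in n" "\<gamma> \<in> polys_in n" using j by (simp_all add: y_def \<gamma>_def polys_in_ypoly polys_in_ycomb)
  have "y * y - \<gamma> * \<gamma> \<in> bott_ideal n A"
    using ypoly_sq_minus_half_alpha_sq[of A j] rel_poly_in_bott_ideal[OF j, of A] half_alpha_eq_ycomb[OF j, of A]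
    by (simp add: y_def \<gamma>_def)
  then have sq: "cls n A (y * y) = cls n A (\<gamma> * \<gamma>)" using cls_eq_iff polys by (simp add: polys_in_mult)
  have hy: "\<psi> (cls n A y) = cls n B (ycomb n B x)" using hom_ycls[OF j] by (simp add: y_def x_def ycls_def)
  have h\<gamma>: "\<psi> (cls n A \<gamma>) = cls n B (ycomb n B z)"
    unfolding \<gamma>_def hom_cls_ycomb z_def by (simp add: mult.commute)
  have "cls n B (ycomb n B x * ycomb n B x) = \<psi> (cls n A (y * y))"
    using hom_cls_mult[OF polys(1) polys(1)] hy by (simp add: cls_mult polys_in_ycomb)
  also have "\<dots> = \<psi> (cls n A (\<gamma> * \<gamma>))" by (simp add: sq)
  also have "\<dots> = cls n B (ycomb n B z * ycomb n B z)"
    using hom_cls_mult[OF polys(2) polys(2)] h\<gamma> by (simp add: cls_mult polys_in_ycomb)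
  finally have "ycomb n B x * ycomb n B x - ycomb n B z * ycomb n B z \<in> bott_ideal n B"
    using cls_eq_iff by (simp add: polys_in_mult polys_in_ycomb)
  then have "yquad n B (\<lambda>a b. x a * x b - z a * z b) \<in> bott_ideal n B"
    by (simp add: yquad_diff_squares)
  then have "in_rel_span {1..n} (half_alpha_ycoeff B) (\<lambda>a b. x a * x b - z a * z b)"
    by (intro yquad_in_bott_ideal_in_rel_span) (auto simp: mult.commute)
  then show ?thesis
    by (rule in_rel_span_cong) (simp only: congr_form_rel_form[OF _ j] x_def z_def finite_atLeastAtMost)
qed

lemma rel_preserving_iso_matrix:
  "rel_preserving {1..n} (half_alpha_ycoeff A) {1..n} (half_alpha_ycoeff B) iso_matrix"
  using congr_rel_form_iso_matrix inj_matrix_iso_matrix by (simp add: rel_preserving_def)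

end

theorem proposition4p1:
  fixes n :: nat and A B :: "nat \<Rightarrow> nat \<Rightarrow> int" and \<psi> :: "mpoly set \<Rightarrow> mpoly set"
  assumes "bott_matrix n A" and "bott_matrix n B"
    and "graded_ring_iso n A B \<psi>"
  shows "\<exists>(q :: nat \<Rightarrow> rat) (\<sigma> :: nat \<Rightarrow> nat). \<sigma> permutes {1..n} \<and>
           (\<forall>j\<in>{1..n}. q j \<noteq> 0 \<and> \<psi> (ycls n A j) = cls n B (Const (q j) * ypoly B (\<sigma> j)))"
proof -
  interpret graded_coh_iso n A B \<psi>
    using assms(3) by (simp add: graded_coh_iso_def graded_coh_iso_axioms_def coh_iso_def graded_ring_iso_def)
  have cols: "\<And>j. j \<in> {1..n} \<Longrightarrow> \<exists>k\<in>{1..n}. column_at {1..n} iso_matrix j k"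
    by (rule rel_preserving_column_at[OF finite_atLeastAtMost finite_atLeastAtMost rel_preserving_iso_matrix])
  obtain \<sigma> where \<sigma>: "\<sigma> permutes {1..n}" "\<forall>j\<in>{1..n}. column_at {1..n} iso_matrix j (\<sigma> j)"
    using inj_matrix_column_at_permutes[OF finite_atLeastAtMost inj_matrix_iso_matrix cols] by blast
  have "iso_matrix (\<sigma> j) j \<noteq> 0 \<and> \<psi> (ycls n A j) = cls n B (Const (iso_matrix (\<sigma> j) j) * ypoly B (\<sigma> j))"
    if j: "j \<in> {1..n}" for j
  proof -
    have \<sigma>j: "\<sigma> j \<in> {1..n}" using permutes_in_image[OF \<sigma>(1)] j by blast
    have col: "column_at {1..n} iso_matrix j (\<sigma> j)" using \<sigma>(2) j by blast
    have "\<psi> (ycls n A j) = cls n B (Const (iso_matrix (\<sigma> j) j) * ypoly B (\<sigma> j))"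
      unfolding hom_ycls[OF j] ycomb_column_at[OF \<sigma>j col] ..
    moreover have "iso_matrix (\<sigma> j) j \<noteq> 0" using col by (simp add: column_at_def)
    ultimately show ?thesis by blast
  qed
  then show ?thesis using \<sigma>(1) by (intro exI[of _ "\<lambda>j. iso_matrix (\<sigma> j) j"] exI[of _ \<sigma>]) blast
qed

end
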